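(* Assume $f_\rho\in\mathscr H_K$. Let $(\gamma_t)_{t\ge1}$ and $(\lambda_t)_{t\ge0}$ be sequences of positive reals, both converging to $0$, and let $(f_t)_{t\ge0}$ be the online sequence defined below with an arbitrary initial value $f_0\in\mathscr H_K$. Suppose that (A) $\sum_{t\ge1}\gamma_t\lambda_t=\infty$; (B) $\displaystyle\limsup_{n\to\infty}\sum_{k=1}^n\gamma_k^2\prod_{i=k+1}^n(1-\gamma_i\lambda_i)^2=0$; (C) $\displaystyle\limsup_{n\to\infty}\sum_{k=1}^n\|f_{\lambda_k}-f_{\lambda_{k-1}}\|_K\prod_{i=k+1}^n(1-\gamma_i\lambda_i)=0$. Then $\displaystyle\lim_{t\to\infty}\mathbb E\big[\|f_t-f_\rho\|_K^2\big]=0$.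
   Context: Setting. $\mathscr X\subseteq\mathbb R^n$ is closed, $\mathscr Y=\mathbb R$, $\mathscr Z=\mathscr X\times\mathscr Y$, and $\rho$ is a Borel probability measure on $\mathscr Z$ with marginal $\rho_{\mathscr X}$ on $\mathscr X$ and conditional distributions $\rho_{\mathscr Y|x}$; the regression function is $f_\rho(x)=\int_{\mathscr Y}y\,d\rho_{\mathscr Y|x}(y)$. It is assumed that $\operatorname{supp}\rho\subseteq\mathscr X\times[-M_\rho,M_\rho]$ for a constant $M_\rho\ge0$. $K:\mathscr X\times\mathscr X\to\mathbb R$ is a Mercer kernel (continuous, symmetric, positive semidefinite) with $\kappa:=\sup_{x\in\mathscr X}\sqrt{K(x,x)}<\infty$; $K_x:=K(x,\cdot)$; $\mathscr H_K$ is the associated reproducing kernel Hilbert space with inner product $\langle\cdot,\cdot\rangle_K$, norm $\|\cdot\|_K$ and reproducing property $f(x)=\langle f,K_x\rangle_K$. $\|\cdot\|_\rho$ is the norm of $L^2_{\rho_{\mathscr X}}$. $L_Kf(x)=\int_{\mathscr X}K(x,u)f(u)\,d\rho_{\mathscr X}(u)$; as an operator on $L^2_{\rho_{\mathscr X}}$ it is compact, positive and self-adjoint, and all its eigenvalues are assumed positive; powers $L_K^r$ ($r>0$) are defined through its orthonormal eigensystem. The statement "$L_K^{-r}f_\rho\in L^2_{\rho_{\mathscr X}}$" means $f_\rho=L_K^rg$ for some $g\in L^2_{\rho_{\mathscr X}}$, and then $\|L_K^{-r}f_\rho\|_\rho:=\|g\|_\rho$. For $\lambda>0$, $f_\lambda:=(L_K+\lambda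 I)^{-1}L_Kf_\rho\in\mathscr H_K$ (the minimizer over $\mathscr H_K$ of $\int(f(x)-y)^2\,d\rho+\lambda\|f\|_K^2$). Online algorithm. $(x_t,y_t)_{t\ge1}$ are i.i.d. with law $\rho$; given $f_0\in\mathscr H_K$ and positive sequences $(\gamma_t)$, $(\lambda_t)$, define for $t\ge1$: $f_t=f_{t-1}-\gamma_t\big[(f_{t-1}(x_t)-y_t)K_{x_t}+\lambda_tf_{t-1}\big]$.
   Formalization: Every element of $\mathscr H_K$ that vanishes $\rho_{\mathscr X}$-almost everywhere is also assumed to be zero, so $\mathscr H_K$ embeds injectively into $L^2_{\rho_{\mathscr X}}$. The paper assumes this as well. *)

theory Defs
  imports "HOL-Probability.Probability"
begin

text \<open>Abstract RKHS: the Hilbert space type 'h is identified with H_K through the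
evaluation map evl (evl f x = f(x)); kx x is K_x. Reproducing property, K_x(u) = K(x,u),
density of the span of the K_x (so 'h is exactly H_K, up to isometric isomorphism), and
functions are considered on X only (normalised to 0 off X).\<close>
definition rkhs_of :: "'a set \<Rightarrow> ('a \<Rightarrow> 'a \<Rightarrow> real) \<Rightarrow> ('h::{real_inner,complete_space} \<Rightarrow> 'a \<Rightarrow> real)
    \<Rightarrow> ('a \<Rightarrow> 'h) \<Rightarrow> bool" where
  "rkhs_of X K evl kx \<longleftrightarrow>
     (\<forall>f. \<forall>x\<in>X. evl f x = inner f (kx x)) \<and>
     (\<forall>x\<in>X. \<forall>u\<in>X. evl (kx x) u = K x u) \<and>
     (\<forall>f. \<forall>x. x \<notin> X \<longrightarrow> evl f x = 0) \<and>
     closure (span (kx ` X)) = UNIV"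

text \<open>Mercer kernel with finite kappa (symmetry and positive semidefiniteness follow from
the RKHS representation K x u = inner (kx x) (kx u)).\<close>
definition mercer_bounded :: "'a::topological_space set \<Rightarrow> ('a \<Rightarrow> 'a \<Rightarrow> real) \<Rightarrow> bool" where
  "mercer_bounded X K \<longleftrightarrow>
     continuous_on (X \<times> X) (\<lambda>(x, u). K x u) \<and>
     (\<forall>x\<in>X. \<forall>u\<in>X. K x u = K u x) \<and>
     (\<forall>n (c::nat \<Rightarrow> real) (p::nat \<Rightarrow> 'a). (\<forall>i<n. p i \<in> X) \<longrightarrow>
        0 \<le> (\<Sum>i<n. \<Sum>j<n. c i * c j * K (p i) (p j))) \<and>
     (\<exists>\<kappa>. \<forall>x\<in>X. sqrt (K x x) \<le> \<kappa>)"

definition marginal :: "('a::topological_space \<times> real) measure \<Rightarrow> 'a measure" where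
  "marginal \<rho> = distr \<rho> borel fst"

text \<open>g is (a version of) the regression function x \<mapsto> \<integral> y d\<rho>(y|x):
the defining property of the conditional expectation of y given x.\<close>
definition is_regression_fn :: "('a::topological_space \<times> real) measure \<Rightarrow> ('a \<Rightarrow> real) \<Rightarrow> bool" where
  "is_regression_fn \<rho> g \<longleftrightarrow>
     g \<in> borel_measurable borel \<and> integrable \<rho> (\<lambda>z. g (fst z)) \<and>
     (\<forall>A \<in> sets borel. (\<integral>z. indicator A (fst z) * snd z \<partial>\<rho>) = (\<integral>z. indicator A (fst z) * g (fst z) \<partial>\<rho>))"

text \<open>All eigenvalues of L_K on L^2(rho_X) are positive, i.e. L_K (a positive operator)
has trivial kernel.\<close>
definition LK_strictly_positive :: "('a::topological_space \<times> real) measure \<Rightarrow> ('a \<Rightarrow> 'a \<Rightarrow> real) \<Rightarrow> bool" where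
  "LK_strictly_positive \<rho> K \<longleftrightarrow>
     (\<forall>g \<in> borel_measurable borel. integrable (marginal \<rho>) (\<lambda>u. (g u)\<^sup>2) \<longrightarrow>
        (AE x in marginal \<rho>. (\<integral>u. K x u * g u \<partial>marginal \<rho>) = 0) \<longrightarrow>
        (AE u in marginal \<rho>. g u = 0))"

definition reg_risk :: "('a \<times> real) measure \<Rightarrow> ('h::real_normed_vector \<Rightarrow> 'a \<Rightarrow> real) \<Rightarrow> real \<Rightarrow> 'h \<Rightarrow> real" where
  "reg_risk \<rho> evl l f = (\<integral>z. (evl f (fst z) - snd z)\<^sup>2 \<partial>\<rho>) + l * (norm f)\<^sup>2"

fun online :: "'h::real_vector \<Rightarrow> (nat \<Rightarrow> real) \<Rightarrow> (nat \<Rightarrow> real) \<Rightarrow> ('a \<Rightarrow> 'h) \<Rightarrow> ('h \<Rightarrow> 'a \<Rightarrow> real)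
    \<Rightarrow> (nat \<Rightarrow> 'a \<times> real) \<Rightarrow> nat \<Rightarrow> 'h" where
  "online f0 \<gamma> lam kx evl z 0 = f0"
| "online f0 \<gamma> lam kx evl z (Suc t) =
     (let f = online f0 \<gamma> lam kx evl z t; x = fst (z (Suc t)); y = snd (z (Suc t)) in
      f - \<gamma> (Suc t) *\<^sub>R ((evl f x - y) *\<^sub>R kx x + lam (Suc t) *\<^sub>R f))"

end

theory Submission
  imports Defs
begin

(* Write f_t for the iterates and q_t = 1 - gamma_t lambda_t.  The proof follows the
   tracking error a_t = (E ||f_t - f_{lambda_t}||^2)^(1/2) against the moving targets
   f_{lambda_t}, the minimizers of the regularized population risk, and proceeds in the
   order of the file:

   1. Real analysis: a recursion  a_{t+1}^2 <= q_{t+1}^2 (a_t + d_{t+1})^2 + C gamma_{t+1}^2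
      with d_t = ||f_{lambda_t} - f_{lambda_{t-1}}|| forces a_t -> 0 under (A), (B), (C).
   2. RKHS (locale rkhs_kernel): evaluation is an inner product with kernel sections
      bounded by kappa; the iterates are finite kernel expansions with measurable
      coefficients, which makes every norm below a measurable random variable.
   3. Population problem (locale regularized_regression): f_lambda satisfies a first-order
      condition, ||f_lambda|| <= ||f_rho||, ||f_lambda||^2 is antitone in lambda, hence
      f_lambda -> f_rho as lambda -> 0; averaging one step over a fresh sample contracts
      by q^2 up to 2 gamma^2 noise_bound.
   4. Online algorithm (locale online_learning): conditioning on the past samples turns
      the averaged one-step bound into the recursion of item 1 for a_t.
   The theorem applies item 1 and concludes with ||f_t - f_rho|| <= ||f_t - f_{lambda_t}||
   + ||f_{lambda_t} - f_rho||. *)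

lemma sum_split_mid:
  fixes f :: "nat \<Rightarrow> 'b::comm_monoid_add"
  assumes "a \<le> b" "b \<le> c"
  shows "(\<Sum>k=a+1..c. f k) = (\<Sum>k=a+1..b. f k) + (\<Sum>k=b+1..c. f k)"
  using sum.ub_add_nat[of "a+1" b f "c - b"] assms by simp

lemma prod_split_mid:
  fixes f :: "nat \<Rightarrow> 'b::comm_monoid_mult"
  assumes "a \<le> b" "b \<le> c"
  shows "(\<Prod>k=a+1..c. f k) = (\<Prod>k=a+1..b. f k) * (\<Prod>k=b+1..c. f k)"
  using prod.ub_add_nat[of "a+1" b f "c - b"] assms by simp

lemma limsup_zero_eventually_less:
  fixes x :: "nat \<Rightarrow> real"
  assumes "limsup (\<lambda>n. ereal (x n)) = 0" "e > 0"
  shows "\<forall>\<^sub>F n in sequentially. x n < e"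
proof -
  have "\<forall>\<^sub>F n in sequentially. ereal (x n) < ereal e"
    by (rule Limsup_lessD) (use assms in simp)
  then show ?thesis by simp
qed

text \<open>A divergent series of step sizes drives the product of the contraction factors
  to zero, via \<open>1 - x \<le> exp (- x)\<close>.\<close>
lemma prod_one_minus_tendsto_zero:
  fixes x :: "nat \<Rightarrow> real"
  assumes A: "filterlim (\<lambda>n. \<Sum>t=1..n. x t) at_top sequentially"
    and x: "\<And>t. t > N \<Longrightarrow> 0 \<le> 1 - x t"
  shows "(\<lambda>n. \<Prod>i=N+1..n. (1 - x i)) \<longlonglongrightarrow> 0"
proof (rule tendsto_sandwich[of "\<lambda>_. 0" _ _ "\<lambda>n. exp (- ((\<Sum>t=1..n. x t) - (\<Sum>t=1..N. x t)))"])
  show "\<forall>\<^sub>F n in sequentially. 0 \<le> (\<Prod>i=N+1..n. (1 - x i))"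
    using x by (intro always_eventually allI prod_nonneg) auto
  show "\<forall>\<^sub>F n in sequentially. (\<Prod>i=N+1..n. (1 - x i)) \<le> exp (- ((\<Sum>t=1..n. x t) - (\<Sum>t=1..N. x t)))"
    unfolding eventually_sequentially
  proof (intro exI[of _ N] allI impI)
    fix n assume n: "N \<le> n"
    have "(\<Sum>t=1..n. x t) - (\<Sum>t=1..N. x t) = (\<Sum>t=N+1..n. x t)"
      using sum_split_mid[of 0 N n x] n by simp
    then have "exp (- ((\<Sum>t=1..n. x t) - (\<Sum>t=1..N. x t))) = (\<Prod>i=N+1..n. exp (- x i))"
      by (simp add: exp_sum[symmetric] sum_negf)
    moreover have "(\<Prod>i=N+1..n. (1 - x i)) \<le> (\<Prod>i=N+1..n. exp (- x i))"
      using x by (intro prod_mono) (auto simp: exp_minus_ge)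
    ultimately show "(\<Prod>i=N+1..n. (1 - x i)) \<le> exp (- ((\<Sum>t=1..n. x t) - (\<Sum>t=1..N. x t)))"
      by simp
  qed
  have "filterlim (\<lambda>n. (- (\<Sum>t=1..N. x t)) + (\<Sum>t=1..n. x t)) at_top sequentially"
    by (rule filterlim_tendsto_add_at_top[OF tendsto_const A])
  then have "filterlim (\<lambda>n. - ((\<Sum>t=1..n. x t) - (\<Sum>t=1..N. x t))) at_bot sequentially"
    by (simp add: filterlim_uminus_at_bot)
  then show "(\<lambda>n. exp (- ((\<Sum>t=1..n. x t) - (\<Sum>t=1..N. x t)))) \<longlonglongrightarrow> 0"
    by (rule filterlim_compose[OF exp_at_bot])
qed simp

text \<open>Conditions (B) and (C) concern weighted sums starting at \<open>k = 1\<close>, while the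
  recursion is only valid from some index \<open>N\<close> on.  The sum splits into a head, which is
  a fixed multiple of \<open>\<Prod>i=N+1..n. q i \<longlonglongrightarrow> 0\<close>, and a nonnegative tail; so the tail
  tends to 0 as well.\<close>
lemma tail_weighted_sum_tendsto_zero:
  fixes d q :: "nat \<Rightarrow> real"
  assumes lim: "limsup (\<lambda>n. ereal (\<Sum>k=1..n. d k * (\<Prod>i=k+1..n. q i))) = 0"
    and P0: "(\<lambda>n. \<Prod>i=N+1..n. q i) \<longlonglongrightarrow> 0"
    and d: "\<And>k. 0 \<le> d k" and q: "\<And>i. i > N \<Longrightarrow> 0 \<le> q i"
  shows "(\<lambda>n. \<Sum>k=N+1..n. d k * (\<Prod>i=k+1..n. q i)) \<longlonglongrightarrow> 0"
proof -
  define S where "S n = (\<Sum>k=1..n. d k * (\<Prod>i=k+1..n. q i))" for n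
  define H where "H = (\<Sum>k=1..N. d k * (\<Prod>i=k+1..N. q i))"
  define T where "T n = (\<Sum>k=N+1..n. d k * (\<Prod>i=k+1..n. q i))" for n
  have split: "S n = H * (\<Prod>i=N+1..n. q i) + T n" if n: "N \<le> n" for n
  proof -
    have "S n = (\<Sum>k=1..N. d k * (\<Prod>i=k+1..n. q i)) + T n"
      unfolding S_def T_def using sum_split_mid[of 0 N n] n by simp
    also have "(\<Sum>k=1..N. d k * (\<Prod>i=k+1..n. q i))
             = (\<Sum>k=1..N. d k * ((\<Prod>i=k+1..N. q i) * (\<Prod>i=N+1..n. q i)))"
    proof (intro sum.cong refl)
      fix k assume "k \<in> {1..N}"
      then show "d k * (\<Prod>i=k+1..n. q i) = d k * ((\<Prod>i=k+1..N. q i) * (\<Prod>i=N+1..n. q i))"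
        using prod_split_mid[of k N n q] n by simp
    qed
    also have "\<dots> = H * (\<Prod>i=N+1..n. q i)"
      unfolding H_def by (simp add: sum_distrib_right mult.assoc)
    finally show ?thesis .
  qed
  have T_nonneg: "0 \<le> T n" for n
    unfolding T_def using d q by (intro sum_nonneg mult_nonneg_nonneg prod_nonneg) auto
  have head: "(\<lambda>n. H * (\<Prod>i=N+1..n. q i)) \<longlonglongrightarrow> 0"
    using tendsto_mult[OF tendsto_const P0, of H] by simp
  show ?thesis unfolding T_def[symmetric]
  proof (rule order_tendstoI)
    fix y :: real assume y: "y < 0"
    show "\<forall>\<^sub>F n in sequentially. y < T n"
      by (intro always_eventually allI less_le_trans[OF y T_nonneg])
  next
    fix y :: real assume y: "y > 0"
    have "\<forall>\<^sub>F n in sequentially. S n < y / 2"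
      unfolding S_def by (rule limsup_zero_eventually_less[OF lim]) (use y in simp)
    moreover have "\<forall>\<^sub>F n in sequentially. - (y / 2) < H * (\<Prod>i=N+1..n. q i)"
      using order_tendstoD(1)[OF head, of "- (y/2)"] y by simp
    moreover have "\<forall>\<^sub>F n in sequentially. N \<le> n" by (rule eventually_ge_at_top)
    ultimately show "\<forall>\<^sub>F n in sequentially. T n < y"
      by eventually_elim (use split in fastforce)
  qed
qed

lemma sqrt_square_plus_le:
  fixes x y c :: real
  assumes "0 \<le> x" "0 \<le> y" "0 \<le> c"
  shows "sqrt ((x + y)\<^sup>2 + c) \<le> sqrt (x\<^sup>2 + c) + y"
proof -
  have s: "x \<le> sqrt (x\<^sup>2 + c)" using assms by (intro real_le_rsqrt) auto
  have "(sqrt (x\<^sup>2 + c) + y)\<^sup>2 = x\<^sup>2 + c + 2 * y * sqrt (x\<^sup>2 + c) + y\<^sup>2"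
    using assms by (simp add: power2_eq_square algebra_simps)
  moreover have "2 * y * x \<le> 2 * y * sqrt (x\<^sup>2 + c)" using s assms by (intro mult_left_mono) auto
  ultimately have "(x + y)\<^sup>2 + c \<le> (sqrt (x\<^sup>2 + c) + y)\<^sup>2"
    by (simp add: power2_eq_square algebra_simps)
  then show ?thesis
    using assms by (intro real_le_lsqrt) auto
qed

lemma perturbed_recursion_bound:
  fixes a d c q :: "nat \<Rightarrow> real"
  assumes a_nn: "\<And>t. 0 \<le> a t" and d_nn: "\<And>t. 0 \<le> d t" and c_nn: "\<And>t. 0 \<le> c t"
    and q: "\<And>t. t > N \<Longrightarrow> 0 \<le> q t \<and> q t \<le> 1"
    and rec: "\<And>t. t \<ge> N \<Longrightarrow> (a (Suc t))\<^sup>2 \<le> (q (Suc t))\<^sup>2 * (a t + d (Suc t))\<^sup>2 + c (Suc t)"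
    and t: "t \<ge> N"
  shows "a t \<le> sqrt ((\<Prod>i=N+1..t. (q i)\<^sup>2) * (a N)\<^sup>2 + (\<Sum>k=N+1..t. c k * (\<Prod>i=k+1..t. (q i)\<^sup>2)))
                + (\<Sum>k=N+1..t. d k * (\<Prod>i=k+1..t. q i))"
  using t
proof (induction t rule: nat_induct_at_least)
  case base
  then show ?case using a_nn[of N] by simp
next
  case (Suc t)
  define U where "U t = (\<Prod>i=N+1..t. (q i)\<^sup>2) * (a N)\<^sup>2 + (\<Sum>k=N+1..t. c k * (\<Prod>i=k+1..t. (q i)\<^sup>2))" for t
  define V where "V t = (\<Sum>k=N+1..t. d k * (\<Prod>i=k+1..t. q i))" for t
  have qS: "0 \<le> q (Suc t)" "q (Suc t) \<le> 1" using q[of "Suc t"] Suc.hyps by auto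
  have U0: "0 \<le> U t" unfolding U_def using c_nn
    by (intro add_nonneg_nonneg mult_nonneg_nonneg sum_nonneg prod_nonneg) auto
  have V0: "0 \<le> V t" unfolding V_def using d_nn q
    by (intro sum_nonneg mult_nonneg_nonneg prod_nonneg) auto
  have US: "U (Suc t) = (q (Suc t))\<^sup>2 * U t + c (Suc t)"
  proof -
    have "(\<Sum>k=N+1..t. c k * (\<Prod>i=k+1..Suc t. (q i)\<^sup>2))
        = (q (Suc t))\<^sup>2 * (\<Sum>k=N+1..t. c k * (\<Prod>i=k+1..t. (q i)\<^sup>2))"
      by (subst sum_distrib_left, rule sum.cong) auto
    then show ?thesis using Suc.hyps unfolding U_def by (simp add: algebra_simps)
  qed
  have VS: "V (Suc t) = q (Suc t) * V t + d (Suc t)"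
  proof -
    have "(\<Sum>k=N+1..t. d k * (\<Prod>i=k+1..Suc t. q i)) = q (Suc t) * (\<Sum>k=N+1..t. d k * (\<Prod>i=k+1..t. q i))"
      by (subst sum_distrib_left, rule sum.cong) auto
    then show ?thesis using Suc.hyps unfolding V_def by (simp add: algebra_simps)
  qed
  have IH: "a t \<le> sqrt (U t) + V t" using Suc.IH unfolding U_def V_def .
  have "(q (Suc t) * (a t + d (Suc t)))\<^sup>2 \<le> (q (Suc t) * (sqrt (U t) + V t + d (Suc t)))\<^sup>2"
    using IH qS a_nn d_nn by (intro power_mono mult_left_mono) auto
  also have "\<dots> = (q (Suc t) * sqrt (U t) + q (Suc t) * (V t + d (Suc t)))\<^sup>2"
    by (simp add: algebra_simps)
  finally have "(q (Suc t))\<^sup>2 * (a t + d (Suc t))\<^sup>2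
      \<le> (q (Suc t) * sqrt (U t) + q (Suc t) * (V t + d (Suc t)))\<^sup>2"
    by (simp add: power_mult_distrib)
  then have "(a (Suc t))\<^sup>2 \<le> (q (Suc t) * sqrt (U t) + q (Suc t) * (V t + d (Suc t)))\<^sup>2 + c (Suc t)"
    using rec[OF Suc.hyps] by linarith
  then have "a (Suc t) \<le> sqrt ((q (Suc t) * sqrt (U t) + q (Suc t) * (V t + d (Suc t)))\<^sup>2 + c (Suc t))"
    using a_nn by (metis real_sqrt_le_mono real_sqrt_abs abs_of_nonneg)
  also have "\<dots> \<le> sqrt ((q (Suc t) * sqrt (U t))\<^sup>2 + c (Suc t)) + q (Suc t) * (V t + d (Suc t))"
    using qS U0 V0 d_nn c_nn by (intro sqrt_square_plus_le) auto
  also have "\<dots> \<le> sqrt (U (Suc t)) + V (Suc t)"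
    unfolding US VS using qS U0 d_nn[of "Suc t"] mult_right_le_one_le[of "d (Suc t)" "q (Suc t)"]
    by (simp add: power_mult_distrib algebra_simps)
  finally show ?case unfolding U_def V_def .
qed

lemma perturbed_recursion_tendsto_zero:
  fixes a d c q :: "nat \<Rightarrow> real"
  assumes a_nn: "\<And>t. 0 \<le> a t" and d_nn: "\<And>t. 0 \<le> d t" and c_nn: "\<And>t. 0 \<le> c t"
    and q: "\<And>t. t > N \<Longrightarrow> 0 \<le> q t \<and> q t \<le> 1"
    and rec: "\<And>t. t \<ge> N \<Longrightarrow> (a (Suc t))\<^sup>2 \<le> (q (Suc t))\<^sup>2 * (a t + d (Suc t))\<^sup>2 + c (Suc t)"
    and P0: "(\<lambda>n. \<Prod>i=N+1..n. q i) \<longlonglongrightarrow> 0"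
    and c_sum: "(\<lambda>n. \<Sum>k=N+1..n. c k * (\<Prod>i=k+1..n. (q i)\<^sup>2)) \<longlonglongrightarrow> 0"
    and d_sum: "(\<lambda>n. \<Sum>k=N+1..n. d k * (\<Prod>i=k+1..n. q i)) \<longlonglongrightarrow> 0"
  shows "a \<longlonglongrightarrow> 0"
proof -
  define B where "B t = sqrt ((\<Prod>i=N+1..t. (q i)\<^sup>2) * (a N)\<^sup>2 + (\<Sum>k=N+1..t. c k * (\<Prod>i=k+1..t. (q i)\<^sup>2)))
                        + (\<Sum>k=N+1..t. d k * (\<Prod>i=k+1..t. q i))" for t
  have "\<forall>\<^sub>F t in sequentially. a t \<le> B t"
    unfolding eventually_sequentially B_def
    by (rule exI[of _ N], intro allI impI perturbed_recursion_bound[where a=a and d=d and c=c and q=q])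
       (use a_nn d_nn c_nn q rec in auto)
  moreover have "(\<lambda>t. \<Prod>i=N+1..t. (q i)\<^sup>2) \<longlonglongrightarrow> 0"
    using tendsto_power[OF P0, of 2] by (simp add: prod_power_distrib)
  then have "B \<longlonglongrightarrow> sqrt (0 * (a N)\<^sup>2 + 0) + 0"
    unfolding B_def by (intro tendsto_intros c_sum d_sum)
  ultimately show ?thesis
    using a_nn by (intro tendsto_sandwich[of "\<lambda>_. 0" a sequentially B]) simp_all
qed

lemma perturbed_recursion_step_size_conditions:
  fixes a d g x :: "nat \<Rightarrow> real"
  assumes a_nn: "\<And>t. 0 \<le> a t" and d_nn: "\<And>t. 0 \<le> d t" and C: "C \<ge> 0"
    and x: "\<And>t. t > N \<Longrightarrow> 0 \<le> 1 - x t \<and> 1 - x t \<le> 1"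
    and rec: "\<And>t. t \<ge> N \<Longrightarrow> (a (Suc t))\<^sup>2 \<le> (1 - x (Suc t))\<^sup>2 * (a t + d (Suc t))\<^sup>2 + C * (g (Suc t))\<^sup>2"
    and A: "filterlim (\<lambda>n. \<Sum>t=1..n. x t) at_top sequentially"
    and B: "limsup (\<lambda>n. ereal (\<Sum>k=1..n. (g k)\<^sup>2 * (\<Prod>i=k+1..n. (1 - x i)\<^sup>2))) = 0"
    and D: "limsup (\<lambda>n. ereal (\<Sum>k=1..n. d k * (\<Prod>i=k+1..n. 1 - x i))) = 0"
  shows "a \<longlonglongrightarrow> 0"
proof -
  have P0: "(\<lambda>n. \<Prod>i=N+1..n. 1 - x i) \<longlonglongrightarrow> 0"
    using x by (intro prod_one_minus_tendsto_zero[OF A]) auto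
  then have "(\<lambda>n. \<Prod>i=N+1..n. (1 - x i)\<^sup>2) \<longlonglongrightarrow> 0"
    using tendsto_power[OF P0, of 2] by (simp add: prod_power_distrib)
  then have "(\<lambda>n. \<Sum>k=N+1..n. (g k)\<^sup>2 * (\<Prod>i=k+1..n. (1 - x i)\<^sup>2)) \<longlonglongrightarrow> 0"
    by (intro tail_weighted_sum_tendsto_zero[OF B]) auto
  then have "(\<lambda>n. C * (\<Sum>k=N+1..n. (g k)\<^sup>2 * (\<Prod>i=k+1..n. (1 - x i)\<^sup>2))) \<longlonglongrightarrow> 0"
    by (rule tendsto_mult_right_zero)
  then have c_sum: "(\<lambda>n. \<Sum>k=N+1..n. C * (g k)\<^sup>2 * (\<Prod>i=k+1..n. (1 - x i)\<^sup>2)) \<longlonglongrightarrow> 0"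
    by (simp add: sum_distrib_left mult.assoc)
  have d_sum: "(\<lambda>n. \<Sum>k=N+1..n. d k * (\<Prod>i=k+1..n. 1 - x i)) \<longlonglongrightarrow> 0"
    using x d_nn by (intro tail_weighted_sum_tendsto_zero[OF D P0]) auto
  show ?thesis
  proof (rule perturbed_recursion_tendsto_zero[where q="\<lambda>i. 1 - x i" and c="\<lambda>k. C * (g k)\<^sup>2",
        OF a_nn d_nn _ x rec P0 c_sum d_sum])
    show "0 \<le> C * (g t)\<^sup>2" for t using C by simp
  qed
qed

lemma eventually_small_steps:
  fixes \<gamma> lam :: "nat \<Rightarrow> real"
  assumes "\<gamma> \<longlonglongrightarrow> 0" "lam \<longlonglongrightarrow> 0"
  shows "\<forall>\<^sub>F t in sequentially. lam t \<le> 1 \<and> \<gamma> t * k \<le> 1 - \<gamma> t * lam t"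
proof -
  have "(\<lambda>t. \<gamma> t * (k + lam t)) \<longlonglongrightarrow> 0 * (k + 0)"
    by (intro tendsto_intros assms)
  then have "\<forall>\<^sub>F t in sequentially. \<gamma> t * (k + lam t) < 1"
    by (intro order_tendstoD(2)) auto
  moreover have "\<forall>\<^sub>F t in sequentially. lam t < 1"
    using order_tendstoD(2)[OF assms(2), of 1] by simp
  ultimately show ?thesis
    by eventually_elim (simp add: algebra_simps)
qed

lemma floor_grid_approx:
  fixes \<phi> :: "'b \<Rightarrow> real"
  assumes N: "N > 0" and bd: "\<And>x. \<bar>\<phi> x\<bar> \<le> Bd"
  shows "finite (range (\<lambda>x. of_int \<lfloor>N * \<phi> x\<rfloor> / N))"
    and "\<bar>\<phi> x - of_int \<lfloor>N * \<phi> x\<rfloor> / N\<bar> \<le> 1 / N"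
proof -
  define R where "R = {- \<lceil>N * Bd\<rceil> - 1 .. \<lceil>N * Bd\<rceil> + 1}"
  have "\<lfloor>N * \<phi> y\<rfloor> \<in> R" for y
  proof -
    have "- Bd \<le> \<phi> y" "\<phi> y \<le> Bd" using bd[of y] by (auto simp: abs_le_iff)
    then have "- (N * Bd) \<le> N * \<phi> y" "N * \<phi> y \<le> N * Bd"
      using mult_left_mono[of "- Bd" "\<phi> y" N] mult_left_mono[of "\<phi> y" Bd N] N by auto
    moreover have "N * Bd \<le> of_int \<lceil>N * Bd\<rceil>" by (rule le_of_int_ceiling)
    ultimately show ?thesis unfolding R_def by (auto simp: le_floor_iff floor_le_iff) linarith+
  qed
  then have "range (\<lambda>x. of_int \<lfloor>N * \<phi> x\<rfloor> / N) \<subseteq> (\<lambda>k. of_int k / N) ` R" by auto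
  then show "finite (range (\<lambda>x. of_int \<lfloor>N * \<phi> x\<rfloor> / N))"
    by (rule finite_subset) (simp add: R_def)
  have "\<phi> x - of_int \<lfloor>N * \<phi> x\<rfloor> / N = (N * \<phi> x - of_int \<lfloor>N * \<phi> x\<rfloor>) / N"
    using N by (simp add: field_simps)
  moreover have "\<bar>N * \<phi> x - of_int \<lfloor>N * \<phi> x\<rfloor>\<bar> \<le> 1" by linarith
  ultimately show "\<bar>\<phi> x - of_int \<lfloor>N * \<phi> x\<rfloor> / N\<bar> \<le> 1 / N"
    using N by (simp add: abs_divide divide_right_mono)
qed

lemma norm_add_sq_le:
  fixes x y :: "'a::real_normed_vector"
  shows "(norm (x + y))\<^sup>2 \<le> 2 * (norm x)\<^sup>2 + 2 * (norm y)\<^sup>2"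
proof -
  have "(norm (x + y))\<^sup>2 \<le> (norm x + norm y)\<^sup>2" by (rule power_mono[OF norm_triangle_ineq]) simp
  also have "\<dots> \<le> 2 * (norm x)\<^sup>2 + 2 * (norm y)\<^sup>2"
    using zero_le_power2[of "norm x - norm y"] by (simp add: power2_eq_square algebra_simps)
  finally show ?thesis .
qed

text \<open>A quadratic \<open>e \<mapsto> 2 e A + e\<^sup>2 B\<close> that is nonnegative everywhere has no linear term;
  this turns the minimality of \<open>f\<^sub>\<lambda>\<close> into a first-order condition.\<close>
lemma quadratic_nonneg_linear_term_zero:
  fixes A B :: real
  assumes "B \<ge> 0" "\<And>e. 0 \<le> 2 * e * A + e\<^sup>2 * B"
  shows "A = 0"
proof (rule ccontr)
  assume A: "A \<noteq> 0"
  define t where "t = 1 / (B + 1)"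
  have t: "t > 0" "t * B < 2" using assms(1) by (auto simp: t_def field_simps)
  have "2 * (- t * A) * A + (- t * A)\<^sup>2 * B = A\<^sup>2 * (t * (t * B - 2))"
    by (simp add: power2_eq_square algebra_simps)
  also have "\<dots> < 0"
    using A t by (intro mult_pos_neg mult_pos_neg) auto
  finally show False using assms(2)[of "- t * A"] by simp
qed

text \<open>Norm estimate for one gradient step
  \<open>q w - g (\<langle>w, k\<rangle> k + \<xi>)\<close>: the data-fit part is absorbed by the contraction
  when \<open>g \<parallel>k\<parallel>\<^sup>2 \<le> q\<close>, leaving a cross term and a second-order noise term.\<close>
lemma gradient_step_norm_bound:
  fixes w k \<xi> :: "'a::real_inner"
  assumes g: "g > 0" and gK: "g * K2 \<le> q" and k: "(norm k)\<^sup>2 \<le> K2" and xi: "(norm \<xi>)\<^sup>2 \<le> C"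
  shows "(norm (q *\<^sub>R w - g *\<^sub>R (inner w k *\<^sub>R k + \<xi>)))\<^sup>2
           \<le> q\<^sup>2 * (norm w)\<^sup>2 - 2 * q * g * inner w \<xi> + 2 * g\<^sup>2 * C"
proof -
  define a where "a = inner w k"
  have e: "(norm (q *\<^sub>R w - g *\<^sub>R (a *\<^sub>R k + \<xi>)))\<^sup>2 =
      q\<^sup>2 * (norm w)\<^sup>2 - 2 * q * g * (a * a + inner w \<xi>) + g\<^sup>2 * (norm (a *\<^sub>R k + \<xi>))\<^sup>2"
    unfolding power2_norm_eq_inner
    by (simp add: inner_diff_left inner_diff_right inner_add_left inner_add_right a_def inner_commute
        algebra_simps power2_eq_square)
  have "(norm (a *\<^sub>R k))\<^sup>2 = a * a * (norm k)\<^sup>2" by (simp add: power2_eq_square)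
  also have "\<dots> \<le> a * a * K2" by (rule mult_left_mono[OF k]) simp
  finally have "(norm (a *\<^sub>R k + \<xi>))\<^sup>2 \<le> 2 * (a * a * K2) + 2 * C"
    using norm_add_sq_le[of "a *\<^sub>R k" \<xi>] xi by linarith
  then have "g\<^sup>2 * (norm (a *\<^sub>R k + \<xi>))\<^sup>2 \<le> g\<^sup>2 * (2 * (a * a * K2) + 2 * C)"
    by (rule mult_left_mono) simp
  moreover have "g * (g * K2) * (a * a) \<le> g * q * (a * a)"
    using gK g by (intro mult_right_mono mult_left_mono) auto
  ultimately show ?thesis unfolding e[folded a_def] a_def[symmetric]
    by (simp add: power2_eq_square algebra_simps)
qed

lemma online_agree:
  assumes "\<And>s. s \<in> {1..t} \<Longrightarrow> z s = z' s"
  shows "online f0 g l k e z t = online f0 g l k e z' t"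
  using assms by (induction t) (auto simp: Let_def)


locale rkhs_kernel =
  fixes X :: "'a::euclidean_space set"
    and K :: "'a \<Rightarrow> 'a \<Rightarrow> real"
    and evl :: "'h::{real_inner,complete_space} \<Rightarrow> 'a \<Rightarrow> real"
    and kx :: "'a \<Rightarrow> 'h"
  assumes X_closed: "closed X"
    and mercer: "mercer_bounded X K"
    and rkhs: "rkhs_of X K evl kx"
begin

text \<open>Kernel section extended by zero outside \<open>X\<close>, so that evaluation is an inner
  product everywhere.\<close>
definition kx_ext :: "'a \<Rightarrow> 'h" where
  "kx_ext x = (if x \<in> X then kx x else 0)"

definition kappa :: real where
  "kappa = (SOME k. k \<ge> 1 \<and> (\<forall>x\<in>X. sqrt (K x x) \<le> k))"

lemma kappa: "kappa \<ge> 1" "\<And>x. x \<in> X \<Longrightarrow> sqrt (K x x) \<le> kappa"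
proof -
  obtain k where k: "\<forall>x\<in>X. sqrt (K x x) \<le> k" using mercer unfolding mercer_bounded_def by blast
  have "\<exists>k. k \<ge> 1 \<and> (\<forall>x\<in>X. sqrt (K x x) \<le> k)"
    by (rule exI[of _ "max k 1"]) (use k in auto)
  from someI_ex[OF this] show "kappa \<ge> 1" "\<And>x. x \<in> X \<Longrightarrow> sqrt (K x x) \<le> kappa"
    unfolding kappa_def by auto
qed

lemma kappa_nonneg: "kappa \<ge> 0"
  using kappa by simp

lemma evl_inner: "evl f x = inner f (kx_ext x)"
  using rkhs unfolding rkhs_of_def kx_ext_def by auto

lemma K_inner: "x \<in> X \<Longrightarrow> u \<in> X \<Longrightarrow> K x u = inner (kx x) (kx u)"
  using rkhs unfolding rkhs_of_def by auto

lemma norm_kx_ext: "norm (kx_ext x) \<le> kappa"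
proof (cases "x \<in> X")
  case True
  have "norm (kx x) = sqrt (K x x)"
    using K_inner[OF True True] by (simp add: norm_eq_sqrt_inner)
  then show ?thesis using kappa True by (simp add: kx_ext_def)
qed (use kappa in \<open>simp add: kx_ext_def\<close>)

lemma abs_evl: "\<bar>evl f x\<bar> \<le> norm f * kappa"
proof -
  have "\<bar>evl f x\<bar> \<le> norm f * norm (kx_ext x)"
    unfolding evl_inner by (rule Cauchy_Schwarz_ineq2)
  also have "\<dots> \<le> norm f * kappa" by (rule mult_left_mono[OF norm_kx_ext]) simp
  finally show ?thesis .
qed

lemma evl_add: "evl (f + g) x = evl f x + evl g x"
  and evl_diff: "evl (f - g) x = evl f x - evl g x"
  and evl_scale: "evl (c *\<^sub>R f) x = c * evl f x"
  by (simp_all add: evl_inner inner_add_left inner_diff_left)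

lemma K_continuous: "continuous_on (X \<times> X) (\<lambda>(x, u). K x u)"
  using mercer unfolding mercer_bounded_def by blast

text \<open>The feature map is continuous, since \<open>\<parallel>K\<^sub>u - K\<^sub>x\<parallel>\<^sup>2 = K u u - 2 K x u + K x x\<close>.\<close>
lemma kx_continuous: "continuous_on X kx"
proof (clarsimp simp: continuous_on_def)
  fix x assume x: "x \<in> X"
  have "continuous_on X (\<lambda>u. (\<lambda>(x, u). K x u) (u, u))"
    by (rule continuous_on_compose2[OF K_continuous]) (auto intro!: continuous_intros)
  then have c1: "continuous_on X (\<lambda>u. K u u)" by simp
  have "continuous_on X (\<lambda>u. (\<lambda>(x, u). K x u) (x, u))"
    by (rule continuous_on_compose2[OF K_continuous]) (use x in \<open>auto intro!: continuous_intros\<close>)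
  then have c2: "continuous_on X (\<lambda>u. K x u)" by simp
  have "((\<lambda>u. K u u - 2 * K x u + K x x) \<longlongrightarrow> K x x - 2 * K x x + K x x) (at x within X)"
    by (intro tendsto_intros) (use c1 c2 x in \<open>auto simp: continuous_on_def\<close>)
  moreover have "\<forall>\<^sub>F u in at x within X. K u u - 2 * K x u + K x x = (norm (kx u - kx x))\<^sup>2"
    unfolding eventually_at_filter using x
    by (intro always_eventually)
       (simp add: power2_norm_eq_inner K_inner inner_diff_left inner_diff_right inner_commute)
  ultimately have "((\<lambda>u. (norm (kx u - kx x))\<^sup>2) \<longlongrightarrow> 0) (at x within X)"
    using tendsto_cong by fastforce
  then have "((\<lambda>u. sqrt ((norm (kx u - kx x))\<^sup>2)) \<longlongrightarrow> sqrt 0) (at x within X)"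
    by (intro tendsto_intros)
  then show "(kx \<longlongrightarrow> kx x) (at x within X)"
    by (simp add: tendsto_norm_zero_iff LIM_zero_iff)
qed

lemma evl_measurable: "evl f \<in> borel_measurable borel"
proof -
  have "(\<lambda>x. if x \<in> X then inner f (kx x) else 0) \<in> borel_measurable borel"
    by (rule borel_measurable_continuous_on_if)
       (use X_closed kx_continuous in \<open>auto intro!: continuous_intros\<close>)
  moreover have "evl f = (\<lambda>x. if x \<in> X then inner f (kx x) else 0)"
    by (auto simp: fun_eq_iff evl_inner kx_ext_def)
  ultimately show ?thesis by simp
qed

lemma kernel_pair_measurable:
  assumes "b \<in> N \<rightarrow>\<^sub>M borel" "b' \<in> N \<rightarrow>\<^sub>M borel"
  shows "(\<lambda>p. inner (kx_ext (b p)) (kx_ext (b' p))) \<in> borel_measurable N"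
proof -
  have "(\<lambda>p. if p \<in> X \<times> X then K (fst p) (snd p) else 0) \<in> borel_measurable borel"
    by (rule borel_measurable_continuous_on_if)
       (use X_closed K_continuous in
         \<open>auto intro!: continuous_intros closed_Times borel_closed simp: case_prod_beta\<close>)
  moreover have "(\<lambda>p. if p \<in> X \<times> X then K (fst p) (snd p) else 0)
               = (\<lambda>p. inner (kx_ext (fst p)) (kx_ext (snd p)))"
    by (auto simp: fun_eq_iff kx_ext_def K_inner)
  ultimately have "(\<lambda>p. inner (kx_ext (fst p)) (kx_ext (snd p))) \<in> borel_measurable borel"
    by simp
  from measurable_compose[OF _ this, of "\<lambda>p. (b p, b' p)"] show ?thesis
    using assms by (simp add: borel_prod[symmetric])
qed

text \<open>The space \<open>'h\<close> carries no useful measurable structure, so measurability of the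
  random iterates is expressed through their form: finite kernel expansions whose
  coefficients and centres depend measurably on the parameter.\<close>
inductive kernel_expansion :: "'p measure \<Rightarrow> ('p \<Rightarrow> 'h) \<Rightarrow> bool" for N :: "'p measure" where
  const: "kernel_expansion N (\<lambda>p. v)"
| kernel: "b \<in> N \<rightarrow>\<^sub>M borel \<Longrightarrow> kernel_expansion N (\<lambda>p. kx_ext (b p))"
| add: "kernel_expansion N F \<Longrightarrow> kernel_expansion N G \<Longrightarrow> kernel_expansion N (\<lambda>p. F p + G p)"
| scale: "kernel_expansion N F \<Longrightarrow> f \<in> borel_measurable N \<Longrightarrow> kernel_expansion N (\<lambda>p. f p *\<^sub>R F p)"

lemma kernel_expansion_inner_const:
  "kernel_expansion N G \<Longrightarrow> (\<lambda>p. inner v (G p)) \<in> borel_measurable N"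
proof (induction rule: kernel_expansion.induct)
  case (kernel b)
  then show ?case using measurable_compose[OF kernel evl_measurable] by (simp add: evl_inner)
qed (auto simp: inner_add_right)

lemma kernel_expansion_inner_kernel:
  "kernel_expansion N G \<Longrightarrow> b \<in> N \<rightarrow>\<^sub>M borel \<Longrightarrow> (\<lambda>p. inner (kx_ext (b p)) (G p)) \<in> borel_measurable N"
proof (induction rule: kernel_expansion.induct)
  case (const v)
  then show ?case using measurable_compose[OF const evl_measurable] by (simp add: evl_inner inner_commute)
qed (auto simp: inner_add_right kernel_pair_measurable)

lemma kernel_expansion_inner:
  "kernel_expansion N F \<Longrightarrow> kernel_expansion N G \<Longrightarrow> (\<lambda>p. inner (F p) (G p)) \<in> borel_measurable N"
  by (induction rule: kernel_expansion.induct)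
     (auto simp: inner_add_left kernel_expansion_inner_const kernel_expansion_inner_kernel)

lemma kernel_expansion_diff:
  "kernel_expansion N F \<Longrightarrow> kernel_expansion N G \<Longrightarrow> kernel_expansion N (\<lambda>p. F p - G p)"
  using kernel_expansion.add[of N F "\<lambda>p. (-1) *\<^sub>R G p"] kernel_expansion.scale[of N G "\<lambda>_. -1"]
  by simp

lemma online_kernel_expansion:
  assumes "\<And>s. s \<in> {1..t} \<Longrightarrow> zz s \<in> N \<rightarrow>\<^sub>M borel"
  shows "kernel_expansion N (\<lambda>p. online f0 g l kx_ext evl (\<lambda>s. zz s p) t)"
  using assms
proof (induction t)
  case 0
  then show ?case by (simp add: kernel_expansion.const)
next
  case (Suc t)
  let ?F = "\<lambda>p. online f0 g l kx_ext evl (\<lambda>s. zz s p) t"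
  have z: "zz (Suc t) \<in> N \<rightarrow>\<^sub>M borel \<Otimes>\<^sub>M borel"
    using Suc.prems[of "Suc t"] by (simp add: borel_prod)
  have x: "(\<lambda>p. fst (zz (Suc t) p)) \<in> N \<rightarrow>\<^sub>M borel"
    and y: "(\<lambda>p. snd (zz (Suc t) p)) \<in> borel_measurable N"
    using measurable_compose[OF z measurable_fst] measurable_compose[OF z measurable_snd] by simp_all
  have F: "kernel_expansion N ?F" using Suc by simp
  have "(\<lambda>p. evl (?F p) (fst (zz (Suc t) p))) \<in> borel_measurable N"
    using kernel_expansion_inner[OF F kernel_expansion.kernel[OF x]] by (simp add: evl_inner)
  then have "kernel_expansion N (\<lambda>p. ?F p - g (Suc t) *\<^sub>R ((evl (?F p) (fst (zz (Suc t) p))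
               - snd (zz (Suc t) p)) *\<^sub>R kx_ext (fst (zz (Suc t) p)) + l (Suc t) *\<^sub>R ?F p))"
    using F x y by (intro kernel_expansion_diff kernel_expansion.intros borel_measurable_diff) auto
  then show ?case by (simp add: Let_def)
qed

lemma online_dist2_measurable:
  assumes "\<And>s. s \<in> {1..t} \<Longrightarrow> zz s \<in> N \<rightarrow>\<^sub>M borel"
  shows "(\<lambda>p. (norm (online f0 g l kx_ext evl (\<lambda>s. zz s p) t - c))\<^sup>2) \<in> borel_measurable N"
  using kernel_expansion_inner[OF kernel_expansion_diff[OF online_kernel_expansion[OF assms]
        kernel_expansion.const] kernel_expansion_diff[OF online_kernel_expansion[OF assms]
        kernel_expansion.const]]
  by (simp add: power2_norm_eq_inner)

lemma online_kx_ext: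
  assumes "\<And>s. s \<in> {1..t} \<Longrightarrow> fst (z s) \<in> X"
  shows "online f0 \<gamma> lam kx evl z t = online f0 \<gamma> lam kx_ext evl z t"
  using assms by (induction t) (auto simp: Let_def kx_ext_def)

end

locale regularized_regression = rkhs_kernel X K evl kx
  for X :: "'a::euclidean_space set"
    and K :: "'a \<Rightarrow> 'a \<Rightarrow> real"
    and evl :: "'h::{real_inner,complete_space} \<Rightarrow> 'a \<Rightarrow> real"
    and kx :: "'a \<Rightarrow> 'h" +
  fixes \<rho> :: "('a \<times> real) measure" and M :: real and fr :: 'h and flam :: "real \<Rightarrow> 'h"
  assumes rho_prob: "prob_space \<rho>" and rho_sets: "sets \<rho> = sets borel"
    and M_nonneg: "0 \<le> M"
    and supp: "AE z in \<rho>. fst z \<in> X \<and> \<bar>snd z\<bar> \<le> M"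
    and embed: "\<And>h. (AE x in marginal \<rho>. evl h x = 0) \<Longrightarrow> h = 0"
    and regr: "is_regression_fn \<rho> (evl fr)"
    and flam_min: "\<And>l f. l > 0 \<Longrightarrow> reg_risk \<rho> evl l (flam l) \<le> reg_risk \<rho> evl l f"
begin

interpretation rho: prob_space \<rho> by (rule rho_prob)

lemma measurable_rho_iff: "f \<in> \<rho> \<rightarrow>\<^sub>M N \<longleftrightarrow> f \<in> borel \<rightarrow>\<^sub>M N"
  by (simp add: measurable_cong_sets[OF rho_sets refl])

lemma fst_measurable: "fst \<in> \<rho> \<rightarrow>\<^sub>M borel"
  unfolding measurable_rho_iff using measurable_fst[of "borel::'a measure" "borel::real measure"]
  by (simp add: borel_prod)

lemma snd_measurable[measurable]: "(\<lambda>z. snd z) \<in> borel_measurable \<rho>"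
  unfolding measurable_rho_iff using measurable_snd[of "borel::'a measure" "borel::real measure"]
  by (simp add: borel_prod)

lemma fst_comp_measurable: "\<psi> \<in> borel_measurable borel \<Longrightarrow> (\<lambda>z. \<psi> (fst z)) \<in> borel_measurable \<rho>"
  by (rule measurable_compose[OF fst_measurable])

lemma evl_fst_measurable[measurable]: "(\<lambda>z. evl v (fst z)) \<in> borel_measurable \<rho>"
  by (rule fst_comp_measurable[OF evl_measurable])

lemma integrable_bounded_on_support:
  fixes B :: real
  assumes "f \<in> borel_measurable \<rho>" "\<And>z. fst z \<in> X \<Longrightarrow> \<bar>snd z\<bar> \<le> M \<Longrightarrow> \<bar>f z\<bar> \<le> B"
  shows "integrable \<rho> f"
proof (rule rho.integrable_const_bound[where B=B])
  show "AE z in \<rho>. norm (f z) \<le> B" using supp by eventually_elim (use assms(2) in auto)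
qed (rule assms(1))

lemma abs_evl_minus_label: "\<bar>snd z\<bar> \<le> M \<Longrightarrow> \<bar>evl a (fst z) - snd z\<bar> \<le> norm a * kappa + M"
  using abs_evl[of a "fst z"] by linarith

lemma integrable_evl_evl: "integrable \<rho> (\<lambda>z. evl a (fst z) * evl b (fst z))"
proof (rule integrable_bounded_on_support)
  fix z :: "'a \<times> real"
  show "\<bar>evl a (fst z) * evl b (fst z)\<bar> \<le> (norm a * kappa) * (norm b * kappa)"
    unfolding abs_mult by (intro mult_mono abs_evl) (auto simp: kappa_nonneg)
qed simp

lemma integrable_error_evl: "integrable \<rho> (\<lambda>z. (evl a (fst z) - snd z) * evl b (fst z))"
proof (rule integrable_bounded_on_support)
  fix z :: "'a \<times> real" assume "\<bar>snd z\<bar> \<le> M"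
  then show "\<bar>(evl a (fst z) - snd z) * evl b (fst z)\<bar> \<le> (norm a * kappa + M) * (norm b * kappa)"
    unfolding abs_mult by (intro mult_mono abs_evl abs_evl_minus_label) (auto simp: kappa_nonneg)
qed simp

lemma integrable_error2: "integrable \<rho> (\<lambda>z. (evl a (fst z) - snd z)\<^sup>2)"
proof (rule integrable_bounded_on_support)
  fix z :: "'a \<times> real" assume "\<bar>snd z\<bar> \<le> M"
  then have "\<bar>evl a (fst z) - snd z\<bar>\<^sup>2 \<le> (norm a * kappa + M)\<^sup>2"
    by (intro power_mono abs_evl_minus_label) simp_all
  then show "\<bar>(evl a (fst z) - snd z)\<^sup>2\<bar> \<le> (norm a * kappa + M)\<^sup>2" by simp
qed simp

lemma reg_risk_line:
  "reg_risk \<rho> evl l (f + e *\<^sub>R v) = reg_risk \<rho> evl l f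
     + 2 * e * ((\<integral>z. (evl f (fst z) - snd z) * evl v (fst z) \<partial>\<rho>) + l * inner f v)
     + e\<^sup>2 * ((\<integral>z. evl v (fst z) * evl v (fst z) \<partial>\<rho>) + l * (norm v)\<^sup>2)"
proof -
  have pt: "(evl (f + e *\<^sub>R v) (fst z) - snd z)\<^sup>2 =
      (evl f (fst z) - snd z)\<^sup>2 + (2 * e) * ((evl f (fst z) - snd z) * evl v (fst z))
       + e\<^sup>2 * (evl v (fst z) * evl v (fst z))" for z
    by (simp add: evl_add evl_scale power2_eq_square algebra_simps)
  have I: "(\<integral>z. (evl (f + e *\<^sub>R v) (fst z) - snd z)\<^sup>2 \<partial>\<rho>) =
      (\<integral>z. (evl f (fst z) - snd z)\<^sup>2 \<partial>\<rho>) + (2 * e) * (\<integral>z. (evl f (fst z) - snd z) * evl v (fst z) \<partial>\<rho>)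
       + e\<^sup>2 * (\<integral>z. evl v (fst z) * evl v (fst z) \<partial>\<rho>)"
    unfolding pt using integrable_error2[of f] integrable_error_evl[of f v] integrable_evl_evl[of v v]
    by simp
  have N: "(norm (f + e *\<^sub>R v))\<^sup>2 = (norm f)\<^sup>2 + 2 * e * inner f v + e\<^sup>2 * (norm v)\<^sup>2"
    by (simp only: power2_norm_eq_inner)
       (simp add: inner_add_left inner_add_right inner_commute algebra_simps power2_eq_square)
  show ?thesis unfolding reg_risk_def I N by (simp add: algebra_simps)
qed

lemma first_order_condition:
  assumes l: "l > 0"
  shows "(\<integral>z. (evl (flam l) (fst z) - snd z) * evl v (fst z) \<partial>\<rho>) + l * inner (flam l) v = 0"
proof (rule quadratic_nonneg_linear_term_zero)
  show "0 \<le> (\<integral>z. evl v (fst z) * evl v (fst z) \<partial>\<rho>) + l * (norm v)\<^sup>2"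
    using l by (intro add_nonneg_nonneg integral_nonneg_AE) auto
  fix e :: real
  have "reg_risk \<rho> evl l (flam l) \<le> reg_risk \<rho> evl l (flam l + e *\<^sub>R v)" by (rule flam_min[OF l])
  then show "0 \<le> 2 * e * ((\<integral>z. (evl (flam l) (fst z) - snd z) * evl v (fst z) \<partial>\<rho>) + l * inner (flam l) v)
     + e\<^sup>2 * ((\<integral>z. evl v (fst z) * evl v (fst z) \<partial>\<rho>) + l * (norm v)\<^sup>2)"
    unfolding reg_risk_line by simp
qed

text \<open>The noise \<open>y - f\<^sub>\<rho>(x)\<close> is orthogonal to every bounded measurable function of
  \<open>x\<close>: by definition of the regression function for indicators, hence for functions with
  finite range, hence by uniform approximation for all of them.\<close>
definition residual :: "'a \<times> real \<Rightarrow> real" where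
  "residual z = snd z - evl fr (fst z)"

lemma residual_measurable: "residual \<in> borel_measurable \<rho>"
  unfolding residual_def by measurable

lemma residual_product_integrable:
  assumes "\<psi> \<in> borel_measurable borel" "\<And>x. \<bar>\<psi> x\<bar> \<le> B"
  shows "integrable \<rho> (\<lambda>z. \<psi> (fst z) * residual z)"
proof (rule integrable_bounded_on_support[where B="B * (M + norm fr * kappa)"])
  show "(\<lambda>z. \<psi> (fst z) * residual z) \<in> borel_measurable \<rho>"
    using fst_comp_measurable[OF assms(1)] residual_measurable by measurable
  fix z :: "'a \<times> real" assume "\<bar>snd z\<bar> \<le> M"
  then have "\<bar>residual z\<bar> \<le> M + norm fr * kappa"
    using abs_evl[of fr "fst z"] unfolding residual_def by linarith
  then show "\<bar>\<psi> (fst z) * residual z\<bar> \<le> B * (M + norm fr * kappa)"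
    unfolding abs_mult using assms(2) order_trans[OF abs_ge_zero assms(2)] by (intro mult_mono) auto
qed

lemma residual_integrable: "integrable \<rho> residual"
  using residual_product_integrable[of "\<lambda>_. 1" 1] by simp

lemma residual_indicator_orthogonal:
  assumes A: "A \<in> sets borel"
  shows "(\<integral>z. indicator A (fst z) * residual z \<partial>\<rho>) = 0"
proof -
  have ind: "(\<lambda>z. indicator A (fst z) :: real) \<in> borel_measurable \<rho>"
    by (rule fst_comp_measurable[OF borel_measurable_indicator[OF A]])
  have i1: "integrable \<rho> (\<lambda>z. indicator A (fst z) * snd z)"
    by (rule integrable_bounded_on_support[where B=M]) (use ind in \<open>auto simp: indicator_def\<close>)
  have i2: "integrable \<rho> (\<lambda>z. indicator A (fst z) * evl fr (fst z))"
    by (rule integrable_bounded_on_support[where B="norm fr * kappa"])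
       (use ind abs_evl kappa_nonneg in \<open>auto simp: indicator_def\<close>)
  have "(\<integral>z. indicator A (fst z) * residual z \<partial>\<rho>) =
      (\<integral>z. indicator A (fst z) * snd z \<partial>\<rho>) - (\<integral>z. indicator A (fst z) * evl fr (fst z) \<partial>\<rho>)"
    unfolding residual_def right_diff_distrib by (rule Bochner_Integration.integral_diff[OF i1 i2])
  also have "\<dots> = 0" using regr A unfolding is_regression_fn_def by auto
  finally show ?thesis .
qed

lemma residual_finite_range_orthogonal:
  assumes \<psi>: "\<psi> \<in> borel_measurable borel" and fin: "finite (range \<psi>)"
  shows "(\<integral>z. \<psi> (fst z) * residual z \<partial>\<rho>) = 0"
proof -
  have sets: "\<psi> -` {v} \<in> sets borel" for v
    using borel_measurable_vimage[OF \<psi>, of v] by simp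
  have integrable: "integrable \<rho> (\<lambda>z. indicator (\<psi> -` {v}) (fst z) * residual z)" for v
    by (rule residual_product_integrable[where B=1]) (use sets in auto)
  have decomp: "\<psi> x = (\<Sum>v\<in>range \<psi>. v * indicator (\<psi> -` {v}) x)" for x
  proof -
    have "(\<Sum>v\<in>range \<psi>. v * indicator (\<psi> -` {v}) x) = (\<Sum>v\<in>range \<psi>. if v = \<psi> x then v else 0)"
      by (intro sum.cong) (auto simp: indicator_def)
    also have "\<dots> = \<psi> x" using fin by (simp add: sum.delta)
    finally show ?thesis by simp
  qed
  have "\<psi> (fst z) * residual z = (\<Sum>v\<in>range \<psi>. v * indicator (\<psi> -` {v}) (fst z)) * residual z" for z
    using decomp[of "fst z"] by (rule arg_cong)
  then have "(\<integral>z. \<psi> (fst z) * residual z \<partial>\<rho>)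
           = (\<integral>z. (\<Sum>v\<in>range \<psi>. v * (indicator (\<psi> -` {v}) (fst z) * residual z)) \<partial>\<rho>)"
    by (simp add: sum_distrib_right mult.assoc)
  also have "\<dots> = (\<Sum>v\<in>range \<psi>. v * (\<integral>z. indicator (\<psi> -` {v}) (fst z) * residual z \<partial>\<rho>))"
    using integrable by (simp add: Bochner_Integration.integral_sum)
  also have "\<dots> = 0" using residual_indicator_orthogonal[OF sets] by simp
  finally show ?thesis .
qed

lemma residual_orthogonal_approx:
  assumes \<phi>: "\<phi> \<in> borel_measurable borel" and bd: "\<And>x. \<bar>\<phi> x\<bar> \<le> Bd" and N: "N \<ge> 1"
  shows "\<bar>\<integral>z. \<phi> (fst z) * residual z \<partial>\<rho>\<bar> \<le> (\<integral>z. \<bar>residual z\<bar> \<partial>\<rho>) / N"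
proof -
  define \<psi> where "\<psi> = (\<lambda>x. of_int \<lfloor>N * \<phi> x\<rfloor> / N)"
  have N0: "N > 0" using N by simp
  have \<psi>: "\<psi> \<in> borel_measurable borel" unfolding \<psi>_def using \<phi> by measurable
  have close: "\<bar>\<phi> x - \<psi> x\<bar> \<le> 1 / N" for x
    unfolding \<psi>_def by (rule floor_grid_approx(2)[OF N0 bd])
  have "finite (range \<psi>)" unfolding \<psi>_def by (rule floor_grid_approx(1)[OF N0 bd])
  then have "(\<integral>z. \<psi> (fst z) * residual z \<partial>\<rho>) = 0"
    by (rule residual_finite_range_orthogonal[OF \<psi>])
  moreover have "\<bar>\<psi> x\<bar> \<le> Bd + 1" for x
  proof -
    have "1 / N \<le> 1" using N by simp
    then show ?thesis
      using abs_triangle_ineq4[of "\<phi> x" "\<phi> x - \<psi> x"] bd[of x] close[of x] by simp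
  qed
  then have "(\<integral>z. (\<phi> (fst z) - \<psi> (fst z)) * residual z \<partial>\<rho>)
           = (\<integral>z. \<phi> (fst z) * residual z \<partial>\<rho>) - (\<integral>z. \<psi> (fst z) * residual z \<partial>\<rho>)"
    unfolding left_diff_distrib
    by (intro Bochner_Integration.integral_diff residual_product_integrable[OF \<phi> bd]
              residual_product_integrable[OF \<psi>])
  ultimately have "\<bar>\<integral>z. \<phi> (fst z) * residual z \<partial>\<rho>\<bar> = \<bar>\<integral>z. (\<phi> (fst z) - \<psi> (fst z)) * residual z \<partial>\<rho>\<bar>"
    by simp
  also have "\<dots> \<le> (\<integral>z. \<bar>(\<phi> (fst z) - \<psi> (fst z)) * residual z\<bar> \<partial>\<rho>)"
    by (rule integral_abs_bound)
  also have "\<dots> \<le> (\<integral>z. \<bar>residual z\<bar> / N \<partial>\<rho>)"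
  proof (rule Bochner_Integration.integral_mono)
    show "integrable \<rho> (\<lambda>z. \<bar>(\<phi> (fst z) - \<psi> (fst z)) * residual z\<bar>)"
      by (rule integrable_abs, rule residual_product_integrable[where \<psi>="\<lambda>x. \<phi> x - \<psi> x"])
         (use \<phi> \<psi> close in auto)
    show "integrable \<rho> (\<lambda>z. \<bar>residual z\<bar> / N)" using residual_integrable by simp
    fix z
    have "\<bar>(\<phi> (fst z) - \<psi> (fst z)) * residual z\<bar> \<le> (1 / N) * \<bar>residual z\<bar>"
      unfolding abs_mult by (rule mult_right_mono[OF close]) simp
    then show "\<bar>(\<phi> (fst z) - \<psi> (fst z)) * residual z\<bar> \<le> \<bar>residual z\<bar> / N" by simp
  qed
  also have "\<dots> = (\<integral>z. \<bar>residual z\<bar> \<partial>\<rho>) / N" by simp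
  finally show ?thesis .
qed

lemma residual_orthogonal:
  assumes \<phi>: "\<phi> \<in> borel_measurable borel" and bd: "\<And>x. \<bar>\<phi> x\<bar> \<le> Bd"
  shows "(\<integral>z. \<phi> (fst z) * residual z \<partial>\<rho>) = 0"
proof -
  have "(\<lambda>n. (\<integral>z. \<bar>residual z\<bar> \<partial>\<rho>) / real (Suc n)) \<longlonglongrightarrow> 0"
    using LIMSEQ_Suc[OF lim_const_over_n[of "\<integral>z. \<bar>residual z\<bar> \<partial>\<rho>"]] by simp
  then have "\<bar>\<integral>z. \<phi> (fst z) * residual z \<partial>\<rho>\<bar> \<le> 0"
    by (rule LIMSEQ_le_const) (use residual_orthogonal_approx[OF \<phi> bd] in auto)
  then show ?thesis by simp
qed

definition L2_inner :: "'h \<Rightarrow> 'h \<Rightarrow> real" where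
  "L2_inner a b = (\<integral>z. evl a (fst z) * evl b (fst z) \<partial>\<rho>)"

text \<open>First-order condition in terms of \<open>f\<^sub>\<rho>\<close>:
  \<open>\<langle>f\<^sub>\<lambda> - f\<^sub>\<rho>, v\<rangle>\<^sub>\<rho> + \<lambda> \<langle>f\<^sub>\<lambda>, v\<rangle>\<^sub>K = 0\<close>, i.e. \<open>f\<^sub>\<lambda> = (L\<^sub>K + \<lambda>)\<^sup>-\<^sup>1 L\<^sub>K f\<^sub>\<rho>\<close>.\<close>
lemma first_order_condition_fr:
  assumes "l > 0"
  shows "L2_inner (flam l - fr) v + l * inner (flam l) v = 0"
proof -
  have "(\<lambda>z. (evl fr (fst z) - snd z) * evl v (fst z)) = (\<lambda>z. - (evl v (fst z) * residual z))"
    by (auto simp: residual_def algebra_simps)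
  then have "(\<integral>z. (evl fr (fst z) - snd z) * evl v (fst z) \<partial>\<rho>) = - (\<integral>z. evl v (fst z) * residual z \<partial>\<rho>)"
    by simp
  also have "\<dots> = 0" using residual_orthogonal[OF evl_measurable abs_evl] by simp
  finally have orth: "(\<integral>z. (evl fr (fst z) - snd z) * evl v (fst z) \<partial>\<rho>) = 0" .
  have "L2_inner (flam l - fr) v = (\<integral>z. (evl (flam l) (fst z) - snd z) * evl v (fst z)
                                      - (evl fr (fst z) - snd z) * evl v (fst z) \<partial>\<rho>)"
    unfolding L2_inner_def by (rule Bochner_Integration.integral_cong) (auto simp: evl_diff algebra_simps)
  also have "\<dots> = (\<integral>z. (evl (flam l) (fst z) - snd z) * evl v (fst z) \<partial>\<rho>)"
    using Bochner_Integration.integral_diff[OF integrable_error_evl integrable_error_evl] orth by simp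
  finally show ?thesis using first_order_condition[OF assms, of v] by simp
qed

lemma L2_inner_nonneg: "L2_inner v v \<ge> 0"
  unfolding L2_inner_def by (rule integral_nonneg_AE) auto

lemma L2_inner_le: "L2_inner v v \<le> kappa\<^sup>2 * (norm v)\<^sup>2"
proof -
  have "L2_inner v v \<le> (\<integral>z. kappa\<^sup>2 * (norm v)\<^sup>2 \<partial>\<rho>)"
    unfolding L2_inner_def
  proof (rule Bochner_Integration.integral_mono[OF integrable_evl_evl])
    fix z :: "'a \<times> real"
    have "\<bar>evl v (fst z)\<bar>\<^sup>2 \<le> (norm v * kappa)\<^sup>2" by (rule power_mono[OF abs_evl]) simp
    then show "evl v (fst z) * evl v (fst z) \<le> kappa\<^sup>2 * (norm v)\<^sup>2"
      by (simp add: power2_eq_square algebra_simps)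
  qed simp
  also have "\<dots> = kappa\<^sup>2 * (norm v)\<^sup>2" using rho.prob_space by simp
  finally show ?thesis .
qed

lemma L2_inner_diff_left: "L2_inner a c - L2_inner b c = L2_inner (a - b) c"
  unfolding L2_inner_def
  using Bochner_Integration.integral_diff[OF integrable_evl_evl[of a c] integrable_evl_evl[of b c]]
  by (simp add: evl_diff left_diff_distrib)

lemma L2_inner_add_le: "L2_inner (a + b) (a + b) \<le> 2 * L2_inner a a + 2 * L2_inner b b"
proof -
  have "L2_inner (a + b) (a + b)
      \<le> (\<integral>z. 2 * (evl a (fst z) * evl a (fst z)) + 2 * (evl b (fst z) * evl b (fst z)) \<partial>\<rho>)"
    unfolding L2_inner_def
  proof (rule Bochner_Integration.integral_mono[OF integrable_evl_evl])
    show "integrable \<rho> (\<lambda>z. 2 * (evl a (fst z) * evl a (fst z)) + 2 * (evl b (fst z) * evl b (fst z)))"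
      using integrable_evl_evl[of a a] integrable_evl_evl[of b b] by simp
    fix z :: "'a \<times> real"
    have "0 \<le> (evl a (fst z) - evl b (fst z))\<^sup>2" by simp
    then show "evl (a + b) (fst z) * evl (a + b) (fst z)
             \<le> 2 * (evl a (fst z) * evl a (fst z)) + 2 * (evl b (fst z) * evl b (fst z))"
      by (simp add: evl_add power2_eq_square algebra_simps)
  qed
  also have "\<dots> = 2 * L2_inner a a + 2 * L2_inner b b"
    unfolding L2_inner_def using integrable_evl_evl[of a a] integrable_evl_evl[of b b] by simp
  finally show ?thesis .
qed

text \<open>Since \<open>L\<^sub>K\<close> is injective, a function with vanishing \<open>L\<^sup>2(\<rho>\<^sub>X)\<close> norm is zero.\<close>
lemma L2_inner_eq_zero:
  assumes "L2_inner h h = 0"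
  shows "h = 0"
proof (rule embed)
  have "AE z in \<rho>. evl h (fst z) * evl h (fst z) = 0"
    using assms unfolding L2_inner_def
    by (subst (asm) integral_nonneg_eq_0_iff_AE) (auto intro: integrable_evl_evl)
  then have "AE z in \<rho>. evl h (fst z) = 0" by simp
  moreover note evl_measurable[measurable]
  ultimately show "AE x in marginal \<rho>. evl h x = 0"
    unfolding marginal_def using fst_measurable by (subst AE_distr_iff) auto
qed

text \<open>Testing the first-order condition with \<open>v = f\<^sub>\<lambda> - f\<^sub>\<rho>\<close> bounds the norm of
  \<open>f\<^sub>\<lambda>\<close> and its approximation error.\<close>
lemma flam_bound:
  assumes l: "l > 0"
  shows "norm (flam l) \<le> norm fr" "L2_inner (flam l - fr) (flam l - fr) \<le> l * (norm fr)\<^sup>2"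
proof -
  let ?p = "flam l"
  have e: "L2_inner (?p - fr) (?p - fr) + l * inner ?p (?p - fr) = 0"
    by (rule first_order_condition_fr[OF l])
  have i1: "inner ?p (?p - fr) = (norm ?p)\<^sup>2 - inner ?p fr"
    by (simp add: inner_diff_right power2_norm_eq_inner)
  have cs: "inner ?p fr \<le> norm ?p * norm fr"
    by (rule Cauchy_Schwarz_ineq2[THEN order_trans[OF abs_ge_self]])
  have "l * ((norm ?p)\<^sup>2 - inner ?p fr) \<le> 0"
    using e L2_inner_nonneg[of "?p - fr"] unfolding i1 by linarith
  then have "(norm ?p)\<^sup>2 \<le> inner ?p fr" using l by (simp add: mult_le_0_iff)
  then have "norm ?p * norm ?p \<le> norm ?p * norm fr" using cs by (simp add: power2_eq_square)
  then show nb: "norm ?p \<le> norm fr"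
    by (cases "norm ?p = 0") (auto simp: mult_le_cancel_left)
  have "L2_inner (?p - fr) (?p - fr) = l * (inner ?p fr - (norm ?p)\<^sup>2)"
    using e i1 by (simp add: algebra_simps)
  also have "\<dots> \<le> l * (norm fr)\<^sup>2"
  proof (rule mult_left_mono)
    have "norm ?p * norm fr \<le> norm fr * norm fr" using nb by (intro mult_right_mono) auto
    then show "inner ?p fr - (norm ?p)\<^sup>2 \<le> (norm fr)\<^sup>2"
      using cs zero_le_power2[of "norm ?p"] unfolding power2_eq_square by linarith
  qed (use l in simp)
  finally show "L2_inner (flam l - fr) (flam l - fr) \<le> l * (norm fr)\<^sup>2" .
qed

text \<open>Comparing the first-order conditions for \<open>\<lambda> < \<lambda>'\<close>:
  \<open>\<parallel>f\<^sub>\<lambda> - f\<^sub>\<lambda>\<^sub>'\<parallel>\<^sup>2 \<le> \<parallel>f\<^sub>\<lambda>\<parallel>\<^sup>2 - \<parallel>f\<^sub>\<lambda>\<^sub>'\<parallel>\<^sup>2\<close>.\<close>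
lemma flam_dist:
  assumes l: "0 < l" "l < l'"
  shows "(norm (flam l - flam l'))\<^sup>2 \<le> (norm (flam l))\<^sup>2 - (norm (flam l'))\<^sup>2"
proof -
  define a where "a = flam l"
  define b where "b = flam l'"
  define d where "d = a - b"
  have e1: "L2_inner (a - fr) d + l * inner a d = 0"
    unfolding a_def by (rule first_order_condition_fr) (use l in auto)
  have e2: "L2_inner (b - fr) d + l' * inner b d = 0"
    unfolding b_def by (rule first_order_condition_fr) (use l in auto)
  have "L2_inner (a - fr) d - L2_inner (b - fr) d = L2_inner d d"
    unfolding L2_inner_diff_left d_def by (simp add: algebra_simps)
  then have "L2_inner d d + l * inner a d - l' * inner b d = 0" using e1 e2 by linarith
  moreover have "inner a d = inner b d + inner d d"
    unfolding d_def by (simp add: inner_diff_left inner_diff_right)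
  ultimately have "L2_inner d d + l * inner d d = (l' - l) * inner b d" by (simp add: algebra_simps)
  moreover have "L2_inner d d + l * inner d d \<ge> 0" using L2_inner_nonneg[of d] l by simp
  ultimately have "inner b d \<ge> 0" using l by (simp add: zero_le_mult_iff)
  moreover have "(norm d)\<^sup>2 = (norm a)\<^sup>2 - (norm b)\<^sup>2 - 2 * inner b d"
    unfolding d_def power2_norm_eq_inner by (simp add: inner_diff_left inner_diff_right inner_commute)
  ultimately show ?thesis unfolding a_def b_def d_def by simp
qed

lemma flam_dist_abs:
  assumes "l > 0" "l' > 0"
  shows "(norm (flam l - flam l'))\<^sup>2 \<le> \<bar>(norm (flam l))\<^sup>2 - (norm (flam l'))\<^sup>2\<bar>"
proof -
  consider "l = l'" | "l < l'" | "l' < l" by linarith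
  then show ?thesis
    using flam_dist[of l l'] flam_dist[of l' l] assms by cases (auto simp: norm_minus_commute)
qed

text \<open>Hence \<open>\<parallel>f\<^sub>\<lambda>\<parallel>\<^sup>2\<close> is antitone and bounded, and \<open>f\<^sub>\<lambda>\<close> is Cauchy as \<open>\<lambda> \<rightarrow> 0\<close>.\<close>
lemma flam_Cauchy:
  assumes pos: "\<And>n. ls n > 0" and lim: "ls \<longlonglongrightarrow> 0"
  shows "Cauchy (\<lambda>n. flam (ls n))"
proof (rule CauchyI)
  fix e :: real assume e: "e > 0"
  define Nf where "Nf l = (norm (flam l))\<^sup>2" for l
  define S where "S = Sup (Nf ` {0<..})"
  have bdd: "bdd_above (Nf ` {0<..})"
    unfolding bdd_above_def Nf_def using flam_bound(1)
    by (intro exI[of _ "(norm fr)\<^sup>2"]) (auto intro!: power_mono)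
  have "S - e\<^sup>2 < S" using e by simp
  then obtain \<delta> where \<delta>: "\<delta> > 0" "S - e\<^sup>2 < Nf \<delta>"
    using less_cSup_iff[OF _ bdd] unfolding S_def by auto
  obtain M where M: "\<And>n. n \<ge> M \<Longrightarrow> ls n < \<delta>"
    using order_tendstoD(2)[OF lim \<delta>(1)] unfolding eventually_sequentially by blast
  have between: "S - e\<^sup>2 < Nf (ls n) \<and> Nf (ls n) \<le> S" if "n \<ge> M" for n
  proof -
    have "(norm (flam (ls n) - flam \<delta>))\<^sup>2 \<le> Nf (ls n) - Nf \<delta>"
      unfolding Nf_def by (rule flam_dist) (use M[OF that] pos[of n] in auto)
    then have "Nf \<delta> \<le> Nf (ls n)"
      using zero_le_power2[of "norm (flam (ls n) - flam \<delta>)"] by linarith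
    moreover have "Nf (ls n) \<le> S" unfolding S_def using bdd pos by (intro cSup_upper) auto
    ultimately show ?thesis using \<delta> by linarith
  qed
  have "norm (flam (ls m) - flam (ls n)) < e" if "m \<ge> M" "n \<ge> M" for m n
  proof -
    have "(norm (flam (ls m) - flam (ls n)))\<^sup>2 \<le> \<bar>Nf (ls m) - Nf (ls n)\<bar>"
      unfolding Nf_def using flam_dist_abs pos by auto
    also have "\<dots> < e\<^sup>2" using between[OF that(1)] between[OF that(2)] by linarith
    finally show ?thesis using e by (simp add: power_less_imp_less_base)
  qed
  then show "\<exists>M. \<forall>m\<ge>M. \<forall>n\<ge>M. norm (flam (ls m) - flam (ls n)) < e" by blast
qed

text \<open>The limit is \<open>f\<^sub>\<rho>\<close>, because \<open>\<parallel>f\<^sub>\<lambda> - f\<^sub>\<rho>\<parallel>\<^sub>\<rho>\<^sup>2 \<le> \<lambda> \<parallel>f\<^sub>\<rho>\<parallel>\<^sup>2\<close> and \<open>L\<^sub>K\<close> is injective.\<close>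
lemma flam_tendsto:
  assumes pos: "\<And>n. ls n > 0" and lim: "ls \<longlonglongrightarrow> 0"
  shows "(\<lambda>n. flam (ls n)) \<longlonglongrightarrow> fr"
proof -
  obtain g where g: "(\<lambda>n. flam (ls n)) \<longlonglongrightarrow> g"
    using flam_Cauchy[OF pos lim] Cauchy_convergent convergent_def by blast
  have bound: "L2_inner (g - fr) (g - fr)
             \<le> 2 * (kappa\<^sup>2 * (norm (g - flam (ls n)))\<^sup>2) + 2 * (ls n * (norm fr)\<^sup>2)" for n
  proof -
    have "L2_inner (g - fr) (g - fr)
        \<le> 2 * L2_inner (g - flam (ls n)) (g - flam (ls n))
          + 2 * L2_inner (flam (ls n) - fr) (flam (ls n) - fr)"
      using L2_inner_add_le[of "g - flam (ls n)" "flam (ls n) - fr"] by simp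
    also have "\<dots> \<le> 2 * (kappa\<^sup>2 * (norm (g - flam (ls n)))\<^sup>2) + 2 * (ls n * (norm fr)\<^sup>2)"
      using L2_inner_le flam_bound(2)[OF pos] by (intro add_mono mult_left_mono) auto
    finally show ?thesis .
  qed
  have "(\<lambda>n. 2 * (kappa\<^sup>2 * (norm (g - flam (ls n)))\<^sup>2) + 2 * (ls n * (norm fr)\<^sup>2)) \<longlonglongrightarrow>
        2 * (kappa\<^sup>2 * (norm (g - g))\<^sup>2) + 2 * (0 * (norm fr)\<^sup>2)"
    by (intro tendsto_intros g lim)
  then have "L2_inner (g - fr) (g - fr) \<le> 0"
    using bound by (intro LIMSEQ_le_const[where a="L2_inner (g - fr) (g - fr)"]) auto
  then have "g - fr = 0"
    using L2_inner_nonneg[of "g - fr"] by (intro L2_inner_eq_zero) linarith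
  then show ?thesis using g by simp
qed

text \<open>Size of the stochastic gradient of the regularized risk at \<open>f\<^sub>\<lambda>\<close>, for \<open>\<lambda> \<le> 1\<close>.\<close>
definition noise_bound :: real where
  "noise_bound = ((kappa * norm fr + M) * kappa + norm fr)\<^sup>2"

lemma noise_bound_nonneg: "noise_bound \<ge> 0"
  unfolding noise_bound_def by simp

lemma gradient_at_flam_bound:
  assumes l: "0 < l" "l \<le> 1" and y: "\<bar>y\<bar> \<le> M"
  shows "(norm ((evl (flam l) x - y) *\<^sub>R kx_ext x + l *\<^sub>R flam l))\<^sup>2 \<le> noise_bound"
proof -
  have nb: "norm (flam l) \<le> norm fr" by (rule flam_bound(1)[OF l(1)])
  have "\<bar>evl (flam l) x - y\<bar> \<le> kappa * norm fr + M"
    using abs_evl[of "flam l" x] y mult_left_mono[OF nb kappa_nonneg] by (simp add: mult.commute)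
  then have a: "\<bar>evl (flam l) x - y\<bar> * norm (kx_ext x) \<le> (kappa * norm fr + M) * kappa"
    using norm_kx_ext by (intro mult_mono) (auto simp: kappa_nonneg M_nonneg)
  have b: "\<bar>l\<bar> * norm (flam l) \<le> norm fr"
    using mult_mono[of "\<bar>l\<bar>" 1 "norm (flam l)" "norm fr"] l nb by simp
  have "norm ((evl (flam l) x - y) *\<^sub>R kx_ext x + l *\<^sub>R flam l) \<le> (kappa * norm fr + M) * kappa + norm fr"
    using norm_triangle_ineq[of "(evl (flam l) x - y) *\<^sub>R kx_ext x" "l *\<^sub>R flam l"] a b by simp
  then show ?thesis unfolding noise_bound_def by (rule power_mono) simp
qed

text \<open>Averaging one step of the algorithm over a fresh sample: the cross term is removed
  by the first-order condition, leaving a contraction by \<open>q = 1 - g \<lambda>\<close> plus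
  \<open>2 g\<^sup>2 noise_bound\<close>.  Written for the error \<open>w = f - f\<^sub>\<lambda>\<close> of the current iterate.\<close>
lemma expected_step_bound:
  assumes l: "0 < l" "l \<le> 1" and g: "g > 0" and gk: "g * kappa\<^sup>2 \<le> 1 - g * l"
  shows "(\<integral>z. (norm ((1 - g * l) *\<^sub>R w - g *\<^sub>R (evl w (fst z) *\<^sub>R kx_ext (fst z)
            + ((evl (flam l) (fst z) - snd z) *\<^sub>R kx_ext (fst z) + l *\<^sub>R flam l))))\<^sup>2 \<partial>\<rho>)
         \<le> (1 - g * l)\<^sup>2 * (norm w)\<^sup>2 + 2 * g\<^sup>2 * noise_bound"
    (is "integral\<^sup>L \<rho> ?L \<le> ?R")
proof -
  let ?q = "1 - g * l"
  define R where "R z = ?q\<^sup>2 * (norm w)\<^sup>2 - 2 * ?q * g * ((evl (flam l) (fst z) - snd z) * evl w (fst z)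
                         + l * inner (flam l) w) + 2 * g\<^sup>2 * noise_bound" for z
  have Ri: "integrable \<rho> R" unfolding R_def using integrable_error_evl[of "flam l" w] by simp
  have "integral\<^sup>L \<rho> R = ?q\<^sup>2 * (norm w)\<^sup>2 - 2 * ?q * g * ((\<integral>z. (evl (flam l) (fst z) - snd z)
                            * evl w (fst z) \<partial>\<rho>) + l * inner (flam l) w) + 2 * g\<^sup>2 * noise_bound"
    unfolding R_def using integrable_error_evl[of "flam l" w] rho.prob_space by simp
  then have RI: "integral\<^sup>L \<rho> R = ?R" using first_order_condition[OF l(1), of w] by simp
  have pt: "?L z \<le> R z" if "\<bar>snd z\<bar> \<le> M" for z
  proof -
    have k: "(norm (kx_ext (fst z)))\<^sup>2 \<le> kappa\<^sup>2" by (rule power_mono[OF norm_kx_ext]) simp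
    have "?L z \<le> ?q\<^sup>2 * (norm w)\<^sup>2 - 2 * ?q * g * inner w ((evl (flam l) (fst z) - snd z) *\<^sub>R kx_ext (fst z)
                 + l *\<^sub>R flam l) + 2 * g\<^sup>2 * noise_bound"
      using gradient_step_norm_bound[OF g gk k gradient_at_flam_bound[OF l that]] by (simp add: evl_inner)
    also have "\<dots> = R z" unfolding R_def by (simp add: inner_add_right evl_inner inner_commute)
    finally show ?thesis .
  qed
  show ?thesis
  proof (cases "integrable \<rho> ?L")
    case True
    have "integral\<^sup>L \<rho> ?L \<le> integral\<^sup>L \<rho> R"
      by (rule integral_mono_AE[OF True Ri]) (use supp pt in \<open>auto elim: eventually_mono\<close>)
    then show ?thesis using RI by simp
  next
    case False
    then show ?thesis
      using noise_bound_nonneg by (simp add: not_integrable_integral_eq)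
  qed
qed

end

text \<open>Moving the centre of a mean-square deviation: by Jensen,
  \<open>E \<parallel>F - c'\<parallel>\<^sup>2 \<le> ((E \<parallel>F - c\<parallel>\<^sup>2)\<^sup>1\<^sup>/\<^sup>2 + \<parallel>c - c'\<parallel>)\<^sup>2\<close>.\<close>
lemma (in prob_space) expected_sq_dist_shift:
  fixes F :: "'a \<Rightarrow> 'b::real_normed_vector"
  assumes int1: "integrable M (\<lambda>\<omega>. norm (F \<omega> - c))"
    and int2: "integrable M (\<lambda>\<omega>. (norm (F \<omega> - c))\<^sup>2)"
    and int2': "integrable M (\<lambda>\<omega>. (norm (F \<omega> - c'))\<^sup>2)"
  shows "(\<integral>\<omega>. (norm (F \<omega> - c'))\<^sup>2 \<partial>M) \<le> (sqrt (\<integral>\<omega>. (norm (F \<omega> - c))\<^sup>2 \<partial>M) + norm (c - c'))\<^sup>2"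
proof -
  define d where "d = norm (c - c')"
  define E1 where "E1 = (\<integral>\<omega>. norm (F \<omega> - c) \<partial>M)"
  define E2 where "E2 = (\<integral>\<omega>. (norm (F \<omega> - c))\<^sup>2 \<partial>M)"
  have E2_nonneg: "E2 \<ge> 0" unfolding E2_def by (rule integral_nonneg_AE) auto
  have "0 \<le> (\<integral>\<omega>. (norm (F \<omega> - c) - E1)\<^sup>2 \<partial>M)" by (rule integral_nonneg_AE) auto
  also have "\<dots> = E2 - E1\<^sup>2"
    unfolding E1_def E2_def by (rule variance_eq[OF int1 int2])
  finally have "sqrt (E1\<^sup>2) \<le> sqrt E2" by (intro real_sqrt_le_mono) simp
  then have E1_le: "E1 \<le> sqrt E2" by simp
  have pt: "(norm (F \<omega> - c'))\<^sup>2 \<le> (norm (F \<omega> - c))\<^sup>2 + 2 * d * norm (F \<omega> - c) + d\<^sup>2" for \<omega>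
  proof -
    have "norm (F \<omega> - c') \<le> norm (F \<omega> - c) + d"
      unfolding d_def using norm_triangle_ineq[of "F \<omega> - c" "c - c'"] by simp
    then have "(norm (F \<omega> - c'))\<^sup>2 \<le> (norm (F \<omega> - c) + d)\<^sup>2" by (rule power_mono) simp
    then show ?thesis by (simp add: power2_eq_square algebra_simps)
  qed
  have "(\<integral>\<omega>. (norm (F \<omega> - c'))\<^sup>2 \<partial>M) \<le> (\<integral>\<omega>. (norm (F \<omega> - c))\<^sup>2 + 2 * d * norm (F \<omega> - c) + d\<^sup>2 \<partial>M)"
    by (rule Bochner_Integration.integral_mono[OF int2' _ pt]) (use int1 int2 in simp)
  also have "\<dots> = E2 + 2 * d * E1 + d\<^sup>2"
    unfolding E1_def E2_def using int1 int2 prob_space by simp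
  also have "\<dots> \<le> E2 + 2 * d * sqrt E2 + d\<^sup>2"
    using E1_le by (simp add: d_def mult_left_mono)
  also have "\<dots> = (sqrt E2 + d)\<^sup>2" using E2_nonneg by (simp add: power2_eq_square algebra_simps)
  finally show ?thesis unfolding E2_def d_def .
qed

locale online_learning = regularized_regression X K evl kx \<rho> M fr flam
  for X :: "'a::euclidean_space set"
    and K :: "'a \<Rightarrow> 'a \<Rightarrow> real"
    and evl :: "'h::{real_inner,complete_space} \<Rightarrow> 'a \<Rightarrow> real"
    and kx :: "'a \<Rightarrow> 'h"
    and \<rho> :: "('a \<times> real) measure" and M :: real and fr :: 'h and flam :: "real \<Rightarrow> 'h" +
  fixes P :: "'w measure" and zs :: "nat \<Rightarrow> 'w \<Rightarrow> 'a \<times> real"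
    and \<gamma> lam :: "nat \<Rightarrow> real" and f0 :: 'h
  assumes P_prob: "prob_space P"
    and iid: "prob_space.indep_vars P (\<lambda>_. borel) zs {1..}"
    and law: "\<And>t. t \<ge> 1 \<Longrightarrow> distr P borel (zs t) = \<rho>"
begin

interpretation P: prob_space P by (rule P_prob)

definition iterate :: "nat \<Rightarrow> 'w \<Rightarrow> 'h" where
  "iterate t \<omega> = online f0 \<gamma> lam kx_ext evl (\<lambda>s. zs s \<omega>) t"

lemma zs_measurable: "s \<ge> 1 \<Longrightarrow> zs s \<in> P \<rightarrow>\<^sub>M borel"
  using iid unfolding P.indep_vars_def by auto

lemma AE_samples_in_support: "AE \<omega> in P. \<forall>s\<ge>1. fst (zs s \<omega>) \<in> X \<and> \<bar>snd (zs s \<omega>)\<bar> \<le> M"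
proof -
  have sets: "{z \<in> space borel. fst z \<in> X \<and> \<bar>snd z\<bar> \<le> M} \<in> sets borel"
  proof -
    have "{z. fst z \<in> X \<and> \<bar>snd z\<bar> \<le> M} = X \<times> {-M..M}" by auto
    then show ?thesis by (auto intro!: borel_closed closed_Times X_closed)
  qed
  have "AE \<omega> in P. fst (zs s \<omega>) \<in> X \<and> \<bar>snd (zs s \<omega>)\<bar> \<le> M" if "s \<ge> 1" for s
    using supp unfolding law[OF that, symmetric] by (subst (asm) AE_distr_iff[OF zs_measurable[OF that] sets])
  then show ?thesis by (subst AE_all_countable) auto
qed

fun iterate_bound :: "nat \<Rightarrow> real" where
  "iterate_bound 0 = norm f0"
| "iterate_bound (Suc t) = iterate_bound t
     + \<bar>\<gamma> (Suc t)\<bar> * ((kappa * iterate_bound t + M) * kappa + \<bar>lam (Suc t)\<bar> * iterate_bound t)"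

lemma online_bound:
  assumes "\<And>s. s \<in> {1..t} \<Longrightarrow> \<bar>snd (z s)\<bar> \<le> M"
  shows "norm (online f0 \<gamma> lam kx_ext evl z t) \<le> iterate_bound t"
  using assms
proof (induction t)
  case (Suc t)
  let ?f = "online f0 \<gamma> lam kx_ext evl z t" and ?x = "fst (z (Suc t))" and ?y = "snd (z (Suc t))"
  let ?B = "iterate_bound t"
  let ?v = "(evl ?f ?x - ?y) *\<^sub>R kx_ext ?x + lam (Suc t) *\<^sub>R ?f"
  have f: "norm ?f \<le> ?B" using Suc by auto
  have B_nonneg: "0 \<le> ?B" using f norm_ge_zero[of ?f] by linarith
  have e: "\<bar>evl ?f ?x - ?y\<bar> \<le> kappa * ?B + M"
    using abs_evl[of ?f ?x] mult_right_mono[OF f kappa_nonneg] Suc.prems[of "Suc t"]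
    by (simp add: mult.commute)
  have "norm ?v \<le> \<bar>evl ?f ?x - ?y\<bar> * norm (kx_ext ?x) + \<bar>lam (Suc t)\<bar> * norm ?f"
    by (rule order_trans[OF norm_triangle_ineq]) simp
  also have "\<dots> \<le> (kappa * ?B + M) * kappa + \<bar>lam (Suc t)\<bar> * ?B"
    using e f norm_kx_ext
    by (intro add_mono mult_mono mult_left_mono) (auto simp: kappa_nonneg M_nonneg B_nonneg)
  finally have v: "norm ?v \<le> (kappa * ?B + M) * kappa + \<bar>lam (Suc t)\<bar> * ?B" .
  have "norm (online f0 \<gamma> lam kx_ext evl z (Suc t)) \<le> norm ?f + norm (\<gamma> (Suc t) *\<^sub>R ?v)"
    unfolding online.simps Let_def by (rule norm_triangle_ineq4)
  also have "\<dots> \<le> ?B + \<bar>\<gamma> (Suc t)\<bar> * ((kappa * ?B + M) * kappa + \<bar>lam (Suc t)\<bar> * ?B)"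
    using f v by (simp add: add_mono mult_left_mono)
  finally show ?case by simp
qed simp

lemma iterate_dist2_measurable: "(\<lambda>\<omega>. (norm (iterate t \<omega> - c))\<^sup>2) \<in> borel_measurable P"
  unfolding iterate_def by (rule online_dist2_measurable) (auto intro: zs_measurable)

lemma iterate_dist_integrable:
  shows "integrable P (\<lambda>\<omega>. norm (iterate t \<omega> - c))"
    and "integrable P (\<lambda>\<omega>. (norm (iterate t \<omega> - c))\<^sup>2)"
proof -
  have bound: "AE \<omega> in P. norm (iterate t \<omega> - c) \<le> iterate_bound t + norm c"
    using AE_samples_in_support
  proof eventually_elim
    case (elim \<omega>)
    then have "norm (iterate t \<omega>) \<le> iterate_bound t"
      unfolding iterate_def by (intro online_bound) auto
    then show ?case using norm_triangle_ineq4[of "iterate t \<omega>" c] by linarith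
  qed
  have "(\<lambda>\<omega>. norm (iterate t \<omega> - c)) \<in> borel_measurable P"
    using measurable_compose[OF iterate_dist2_measurable borel_measurable_sqrt] by simp
  then show "integrable P (\<lambda>\<omega>. norm (iterate t \<omega> - c))"
    using bound by (intro P.integrable_const_bound[where B="iterate_bound t + norm c"]) auto
  show "integrable P (\<lambda>\<omega>. (norm (iterate t \<omega> - c))\<^sup>2)"
    using bound
    by (intro P.integrable_const_bound[where B="(iterate_bound t + norm c)\<^sup>2"] iterate_dist2_measurable)
       (auto elim!: eventually_mono intro: power_mono)
qed

lemma online_error_step:
  "online f0 \<gamma> lam kx_ext evl z (Suc t) - \<phi> =
    (1 - \<gamma> (Suc t) * lam (Suc t)) *\<^sub>R (online f0 \<gamma> lam kx_ext evl z t - \<phi>)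
    - \<gamma> (Suc t) *\<^sub>R (evl (online f0 \<gamma> lam kx_ext evl z t - \<phi>) (fst (z (Suc t))) *\<^sub>R kx_ext (fst (z (Suc t)))
       + ((evl \<phi> (fst (z (Suc t))) - snd (z (Suc t))) *\<^sub>R kx_ext (fst (z (Suc t))) + lam (Suc t) *\<^sub>R \<phi>))"
  by (simp add: Let_def evl_diff algebra_simps)

definition past_space :: "nat \<Rightarrow> (nat \<Rightarrow> 'a \<times> real) measure" where
  "past_space t = PiM {1..t} (\<lambda>_. borel)"

definition past :: "nat \<Rightarrow> 'w \<Rightarrow> nat \<Rightarrow> 'a \<times> real" where
  "past t \<omega> = restrict (\<lambda>s. zs s \<omega>) {1..t}"

definition next_space :: "nat \<Rightarrow> (nat \<Rightarrow> 'a \<times> real) measure" where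
  "next_space t = PiM {Suc t} (\<lambda>_. borel)"

definition next_sample :: "nat \<Rightarrow> 'w \<Rightarrow> nat \<Rightarrow> 'a \<times> real" where
  "next_sample t \<omega> = restrict (\<lambda>s. zs s \<omega>) {Suc t}"

lemma past_measurable: "past t \<in> P \<rightarrow>\<^sub>M past_space t"
  unfolding past_def past_space_def by (rule measurable_restrict) (auto intro: zs_measurable)

lemma next_sample_measurable: "next_sample t \<in> P \<rightarrow>\<^sub>M next_space t"
  unfolding next_sample_def next_space_def by (rule measurable_restrict) (auto intro: zs_measurable)

lemma next_sample_eval_measurable: "(\<lambda>v. v (Suc t)) \<in> next_space t \<rightarrow>\<^sub>M borel"
  unfolding next_space_def by (rule measurable_component_singleton) auto

lemma indep_past_next: "P.indep_var (past_space t) (past t) (next_space t) (next_sample t)"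
  unfolding past_space_def past_def[abs_def] next_space_def next_sample_def[abs_def]
  by (rule P.indep_var_restrict[OF iid]) auto

lemma next_sample_average:
  fixes \<Psi> :: "(nat \<Rightarrow> 'a \<times> real) \<times> ('a \<times> real) \<Rightarrow> real"
  assumes \<Psi>: "\<Psi> \<in> borel_measurable (past_space t \<Otimes>\<^sub>M borel)" and u: "u \<in> space (past_space t)"
  shows "(\<integral>v. \<Psi> (u, v (Suc t)) \<partial>distr P (next_space t) (next_sample t)) = (\<integral>z. \<Psi> (u, z) \<partial>\<rho>)"
proof -
  have \<Psi>u: "(\<lambda>z. \<Psi> (u, z)) \<in> borel_measurable borel"
    by (rule measurable_Pair2[OF \<Psi> u])
  have "(\<integral>v. \<Psi> (u, v (Suc t)) \<partial>distr P (next_space t) (next_sample t)) = (\<integral>\<omega>. \<Psi> (u, zs (Suc t) \<omega>) \<partial>P)"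
    by (subst integral_distr[OF next_sample_measurable[of t]
          measurable_compose[OF next_sample_eval_measurable[of t] \<Psi>u]])
       (simp add: next_sample_def)
  also have "\<dots> = (\<integral>z. \<Psi> (u, z) \<partial>distr P borel (zs (Suc t)))"
    by (rule integral_distr[OF zs_measurable \<Psi>u, symmetric]) simp
  finally show ?thesis using law[of "Suc t"] by simp
qed

text \<open>Conditioning on the past: since the next sample is independent of the past and has
  law \<open>\<rho>\<close>, a bound on the \<open>\<rho>\<close>-average over the next sample for every fixed past
  integrates to a bound in expectation (Fubini on the product of the two laws).\<close>
lemma expectation_next_sample_le:
  fixes \<Psi> :: "(nat \<Rightarrow> 'a \<times> real) \<times> ('a \<times> real) \<Rightarrow> real" and G :: "(nat \<Rightarrow> 'a \<times> real) \<Rightarrow> real"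
  assumes \<Psi>: "\<Psi> \<in> borel_measurable (past_space t \<Otimes>\<^sub>M borel)"
    and int_\<Psi>: "integrable P (\<lambda>\<omega>. \<Psi> (past t \<omega>, zs (Suc t) \<omega>))"
    and G: "G \<in> borel_measurable (past_space t)" and int_G: "integrable P (\<lambda>\<omega>. G (past t \<omega>))"
    and le: "\<And>u. (\<integral>z. \<Psi> (u, z) \<partial>\<rho>) \<le> G u"
  shows "(\<integral>\<omega>. \<Psi> (past t \<omega>, zs (Suc t) \<omega>) \<partial>P) \<le> (\<integral>\<omega>. G (past t \<omega>) \<partial>P)"
proof -
  define Du where "Du = distr P (past_space t) (past t)"
  define Dv where "Dv = distr P (next_space t) (next_sample t)"
  define \<Psi>' where "\<Psi>' p = \<Psi> (fst p, snd p (Suc t))" for p :: "(nat \<Rightarrow> 'a \<times> real) \<times> (nat \<Rightarrow> 'a \<times> real)"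
  interpret Du: prob_space Du unfolding Du_def by (rule P.prob_space_distr[OF past_measurable])
  interpret Dv: prob_space Dv unfolding Dv_def by (rule P.prob_space_distr[OF next_sample_measurable])
  interpret DD: pair_prob_space Du Dv ..
  have pair: "(\<lambda>\<omega>. (past t \<omega>, next_sample t \<omega>)) \<in> P \<rightarrow>\<^sub>M past_space t \<Otimes>\<^sub>M next_space t"
    by (rule measurable_Pair[OF past_measurable next_sample_measurable])
  have \<Psi>': "\<Psi>' \<in> borel_measurable (past_space t \<Otimes>\<^sub>M next_space t)"
    unfolding \<Psi>'_def using next_sample_eval_measurable \<Psi> by measurable
  have joint: "Du \<Otimes>\<^sub>M Dv = distr P (past_space t \<Otimes>\<^sub>M next_space t) (\<lambda>\<omega>. (past t \<omega>, next_sample t \<omega>))"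
    using indep_past_next unfolding P.indep_var_distribution_eq Du_def Dv_def by blast
  have \<Psi>'_past: "\<Psi>' (past t \<omega>, next_sample t \<omega>) = \<Psi> (past t \<omega>, zs (Suc t) \<omega>)" for \<omega>
    by (simp add: \<Psi>'_def next_sample_def)
  have int: "integrable (Du \<Otimes>\<^sub>M Dv) \<Psi>'"
    unfolding joint by (subst integrable_distr_eq[OF pair \<Psi>']) (simp add: \<Psi>'_past int_\<Psi>)
  have int_Du: "integrable Du G"
    unfolding Du_def by (subst integrable_distr_eq[OF past_measurable G]) (rule int_G)
  have "(\<integral>\<omega>. \<Psi> (past t \<omega>, zs (Suc t) \<omega>) \<partial>P) = integral\<^sup>L (Du \<Otimes>\<^sub>M Dv) \<Psi>'"
    unfolding joint \<Psi>'_past[symmetric] by (rule integral_distr[OF pair \<Psi>', symmetric])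
  also have "\<dots> = (\<integral>u. (\<integral>v. \<Psi>' (u, v) \<partial>Dv) \<partial>Du)"
    by (rule DD.integral_fst'[OF int, symmetric])
  also have "\<dots> \<le> (\<integral>u. G u \<partial>Du)"
  proof (rule integral_mono_AE[OF DD.integrable_fst'[OF int] int_Du AE_I2])
    fix u assume "u \<in> space Du"
    then have "u \<in> space (past_space t)" by (simp add: Du_def)
    then show "(\<integral>v. \<Psi>' (u, v) \<partial>Dv) \<le> G u"
      using next_sample_average[OF \<Psi>] le unfolding Dv_def \<Psi>'_def by simp
  qed
  also have "\<dots> = (\<integral>\<omega>. G (past t \<omega>) \<partial>P)"
    unfolding Du_def by (rule integral_distr[OF past_measurable G])
  finally show ?thesis .
qed

lemma next_iterate_dist2_measurable:
  "(\<lambda>p. (norm (online f0 \<gamma> lam kx_ext evl ((fst p)(Suc t := snd p)) (Suc t) - \<phi>))\<^sup>2)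
     \<in> borel_measurable (past_space t \<Otimes>\<^sub>M borel)"
proof (rule online_dist2_measurable)
  fix s :: nat assume s: "s \<in> {1..Suc t}"
  show "(\<lambda>p. ((fst p)(Suc t := snd p)) s) \<in> past_space t \<Otimes>\<^sub>M borel \<rightarrow>\<^sub>M borel"
  proof (cases "s = Suc t")
    case False
    then have "(\<lambda>x. x s) \<in> past_space t \<rightarrow>\<^sub>M borel"
      using s unfolding past_space_def by (intro measurable_component_singleton) auto
    then show ?thesis using False by simp
  qed simp
qed

lemma past_iterate_dist2_measurable:
  "(\<lambda>u. (norm (online f0 \<gamma> lam kx_ext evl u t - \<phi>))\<^sup>2) \<in> borel_measurable (past_space t)"
  using online_dist2_measurable[where zz="\<lambda>s u. u s" and N="past_space t"]
  by (auto simp: past_space_def intro: measurable_component_singleton)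

lemma expected_step:
  assumes l: "0 < lam (Suc t)" "lam (Suc t) \<le> 1" and g: "\<gamma> (Suc t) > 0"
    and gk: "\<gamma> (Suc t) * kappa\<^sup>2 \<le> 1 - \<gamma> (Suc t) * lam (Suc t)"
  shows "(\<integral>\<omega>. (norm (iterate (Suc t) \<omega> - flam (lam (Suc t))))\<^sup>2 \<partial>P)
     \<le> (1 - \<gamma> (Suc t) * lam (Suc t))\<^sup>2 * (\<integral>\<omega>. (norm (iterate t \<omega> - flam (lam (Suc t))))\<^sup>2 \<partial>P)
        + 2 * (\<gamma> (Suc t))\<^sup>2 * noise_bound"
proof -
  define \<phi> where "\<phi> = flam (lam (Suc t))"
  define q where "q = 1 - \<gamma> (Suc t) * lam (Suc t)"
  define c where "c = 2 * (\<gamma> (Suc t))\<^sup>2 * noise_bound"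
  define \<Psi> where "\<Psi> p = (norm (online f0 \<gamma> lam kx_ext evl ((fst p)(Suc t := snd p)) (Suc t) - \<phi>))\<^sup>2"
    for p :: "(nat \<Rightarrow> 'a \<times> real) \<times> ('a \<times> real)"
  define G where "G u = q\<^sup>2 * (norm (online f0 \<gamma> lam kx_ext evl u t - \<phi>))\<^sup>2 + c"
    for u :: "nat \<Rightarrow> 'a \<times> real"
  have \<Psi>_past: "\<Psi> (past t \<omega>, zs (Suc t) \<omega>) = (norm (iterate (Suc t) \<omega> - \<phi>))\<^sup>2" for \<omega>
    unfolding \<Psi>_def iterate_def past_def
    by (intro arg_cong[where f="\<lambda>x. (norm (x - \<phi>))\<^sup>2"] online_agree) auto
  have G_past: "G (past t \<omega>) = q\<^sup>2 * (norm (iterate t \<omega> - \<phi>))\<^sup>2 + c" for \<omega>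
    unfolding G_def iterate_def past_def
    by (intro arg_cong[where f="\<lambda>x. q\<^sup>2 * (norm (x - \<phi>))\<^sup>2 + c"] online_agree) auto
  have \<Psi>_measurable: "\<Psi> \<in> borel_measurable (past_space t \<Otimes>\<^sub>M borel)"
    unfolding \<Psi>_def by (rule next_iterate_dist2_measurable)
  have G_measurable: "G \<in> borel_measurable (past_space t)"
    unfolding G_def using past_iterate_dist2_measurable by measurable
  have "(\<integral>z. \<Psi> (u, z) \<partial>\<rho>) \<le> G u" for u
  proof -
    have agree: "online f0 \<gamma> lam kx_ext evl (u(Suc t := z)) t = online f0 \<gamma> lam kx_ext evl u t" for z
      by (rule online_agree) auto
    have "\<Psi> (u, z) = (norm (q *\<^sub>R (online f0 \<gamma> lam kx_ext evl u t - \<phi>)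
               - \<gamma> (Suc t) *\<^sub>R (evl (online f0 \<gamma> lam kx_ext evl u t - \<phi>) (fst z) *\<^sub>R kx_ext (fst z)
               + ((evl \<phi> (fst z) - snd z) *\<^sub>R kx_ext (fst z) + lam (Suc t) *\<^sub>R \<phi>))))\<^sup>2" for z
      unfolding \<Psi>_def online_error_step q_def by (simp add: agree)
    then show ?thesis
      unfolding G_def q_def c_def \<phi>_def by (simp add: expected_step_bound[OF l g gk])
  qed
  then have "(\<integral>\<omega>. \<Psi> (past t \<omega>, zs (Suc t) \<omega>) \<partial>P) \<le> (\<integral>\<omega>. G (past t \<omega>) \<partial>P)"
    using iterate_dist_integrable(2)
    by (intro expectation_next_sample_le[OF \<Psi>_measurable _ G_measurable]) (simp_all add: \<Psi>_past G_past)
  then show ?thesis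
    using iterate_dist_integrable(2) P.prob_space by (simp add: \<Psi>_past G_past q_def c_def \<phi>_def)
qed

definition tracking_error :: "nat \<Rightarrow> real" where
  "tracking_error t = sqrt (\<integral>\<omega>. (norm (iterate t \<omega> - flam (lam t)))\<^sup>2 \<partial>P)"

lemma tracking_error_nonneg: "tracking_error t \<ge> 0"
  unfolding tracking_error_def by (intro real_sqrt_ge_zero integral_nonneg_AE) auto

lemma tracking_error_recursion:
  assumes "0 < lam (Suc t)" "lam (Suc t) \<le> 1" "\<gamma> (Suc t) > 0"
    and "\<gamma> (Suc t) * kappa\<^sup>2 \<le> 1 - \<gamma> (Suc t) * lam (Suc t)"
  shows "(tracking_error (Suc t))\<^sup>2 \<le> (1 - \<gamma> (Suc t) * lam (Suc t))\<^sup>2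
           * (tracking_error t + norm (flam (lam (Suc t)) - flam (lam t)))\<^sup>2
           + 2 * noise_bound * (\<gamma> (Suc t))\<^sup>2"
proof -
  have "(tracking_error (Suc t))\<^sup>2 = (\<integral>\<omega>. (norm (iterate (Suc t) \<omega> - flam (lam (Suc t))))\<^sup>2 \<partial>P)"
    unfolding tracking_error_def by (simp add: integral_nonneg_AE)
  also have "\<dots> \<le> (1 - \<gamma> (Suc t) * lam (Suc t))\<^sup>2 * (\<integral>\<omega>. (norm (iterate t \<omega> - flam (lam (Suc t))))\<^sup>2 \<partial>P)
                  + 2 * (\<gamma> (Suc t))\<^sup>2 * noise_bound"
    by (rule expected_step[OF assms])
  also have "\<dots> \<le> (1 - \<gamma> (Suc t) * lam (Suc t))\<^sup>2
                   * (tracking_error t + norm (flam (lam (Suc t)) - flam (lam t)))\<^sup>2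
                  + 2 * noise_bound * (\<gamma> (Suc t))\<^sup>2"
    using P.expected_sq_dist_shift[of "iterate t" "flam (lam t)" "flam (lam (Suc t))",
        OF iterate_dist_integrable iterate_dist_integrable(2)]
    unfolding tracking_error_def by (simp add: mult_left_mono norm_minus_commute)
  finally show ?thesis .
qed

text \<open>Conclusion for the original algorithm, which uses \<open>K\<^sub>x\<close> itself: almost surely all
  samples lie in \<open>X\<close>, where \<open>K\<^sub>x\<close> agrees with its extension, and the mean-square
  distance to \<open>f\<^sub>\<rho>\<close> is controlled by the tracking error and the bias \<open>\<parallel>f\<^sub>\<lambda>\<^sub>t - f\<^sub>\<rho>\<parallel>\<close>.\<close>
lemma expected_error_le:
  "(\<integral>\<omega>. (norm (online f0 \<gamma> lam kx evl (\<lambda>s. zs s \<omega>) t - fr))\<^sup>2 \<partial>P)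
     \<le> (tracking_error t + norm (flam (lam t) - fr))\<^sup>2"
proof -
  let ?F = "\<lambda>\<omega>. online f0 \<gamma> lam kx evl (\<lambda>s. zs s \<omega>) t"
  have AE_eq: "AE \<omega> in P. (norm (?F \<omega> - fr))\<^sup>2 = (norm (iterate t \<omega> - fr))\<^sup>2"
    using AE_samples_in_support
  proof eventually_elim
    case (elim \<omega>)
    then have "?F \<omega> = iterate t \<omega>" unfolding iterate_def by (intro online_kx_ext) auto
    then show ?case by simp
  qed
  have "(\<integral>\<omega>. (norm (?F \<omega> - fr))\<^sup>2 \<partial>P) \<le> (\<integral>\<omega>. (norm (iterate t \<omega> - fr))\<^sup>2 \<partial>P)"
  proof (cases "integrable P (\<lambda>\<omega>. (norm (?F \<omega> - fr))\<^sup>2)")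
    case True
    then show ?thesis
      using AE_eq iterate_dist2_measurable by (subst integral_cong_AE[OF _ _ AE_eq]) auto
  qed (simp add: not_integrable_integral_eq integral_nonneg_AE)
  also have "\<dots> \<le> (tracking_error t + norm (flam (lam t) - fr))\<^sup>2"
    unfolding tracking_error_def
    by (rule P.expected_sq_dist_shift[OF iterate_dist_integrable iterate_dist_integrable(2)])
  finally show ?thesis .
qed

end

theorem theoremA:
  fixes X :: "'a::euclidean_space set"
    and K :: "'a \<Rightarrow> 'a \<Rightarrow> real"
    and evl :: "'h::{real_inner,complete_space} \<Rightarrow> 'a \<Rightarrow> real"
    and kx :: "'a \<Rightarrow> 'h"
    and \<rho> :: "('a \<times> real) measure"
    and M\<rho> :: real
    and fr :: 'h
    and flam :: "real \<Rightarrow> 'h"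
    and \<gamma> lam :: "nat \<Rightarrow> real"
    and f0 :: 'h
    and P :: "'w measure"
    and zs :: "nat \<Rightarrow> 'w \<Rightarrow> 'a \<times> real"
  assumes X_closed: "closed X"
    and mercer: "mercer_bounded X K"
    and rkhs: "rkhs_of X K evl kx"
    and rho_prob: "prob_space \<rho>" and rho_sets: "sets \<rho> = sets borel"
    and M_nonneg: "0 \<le> M\<rho>"
    and supp: "AE z in \<rho>. fst z \<in> X \<and> \<bar>snd z\<bar> \<le> M\<rho>"
    and LK_pos: "LK_strictly_positive \<rho> K"
    and embed: "\<And>h. (AE x in marginal \<rho>. evl h x = 0) \<Longrightarrow> h = 0"
    and f_rho_in_HK: "is_regression_fn \<rho> (evl fr)"
    and flam_def: "\<And>l f. l > 0 \<Longrightarrow> reg_risk \<rho> evl l (flam l) \<le> reg_risk \<rho> evl l f"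
    and gamma_pos: "\<And>t. t \<ge> 1 \<Longrightarrow> \<gamma> t > 0"
    and lam_pos: "\<And>t. lam t > 0"
    and gamma_lim: "\<gamma> \<longlonglongrightarrow> 0"
    and lam_lim: "lam \<longlonglongrightarrow> 0"
    and P_prob: "prob_space P"
    and iid: "prob_space.indep_vars P (\<lambda>_. borel) zs {1..}"
    and law: "\<And>t. t \<ge> 1 \<Longrightarrow> distr P borel (zs t) = \<rho>"
    and A: "filterlim (\<lambda>n. \<Sum>t=1..n. \<gamma> t * lam t) at_top sequentially"
    and B: "limsup (\<lambda>n. ereal (\<Sum>k=1..n. (\<gamma> k)\<^sup>2 * (\<Prod>i=k+1..n. (1 - \<gamma> i * lam i)\<^sup>2))) = 0"
    and C: "limsup (\<lambda>n. ereal (\<Sum>k=1..n. norm (flam (lam k) - flam (lam (k - 1)))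
                                   * (\<Prod>i=k+1..n. (1 - \<gamma> i * lam i)))) = 0"
  shows "(\<lambda>t. \<integral>\<omega>. (norm (online f0 \<gamma> lam kx evl (\<lambda>s. zs s \<omega>) t - fr))\<^sup>2 \<partial>P) \<longlonglongrightarrow> 0"
proof -
  interpret online_learning X K evl kx \<rho> M\<rho> fr flam P zs \<gamma> lam f0
    by (intro online_learning.intro regularized_regression.intro rkhs_kernel.intro
        regularized_regression_axioms.intro online_learning_axioms.intro) fact+
  obtain N where N: "\<And>t. t \<ge> N \<Longrightarrow> lam t \<le> 1 \<and> \<gamma> t * kappa\<^sup>2 \<le> 1 - \<gamma> t * lam t"
    using eventually_small_steps[OF gamma_lim lam_lim, of "kappa\<^sup>2"]
    unfolding eventually_sequentially by blast
  have q: "0 \<le> 1 - \<gamma> t * lam t \<and> 1 - \<gamma> t * lam t \<le> 1" if "t > N" for t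
  proof -
    have "0 \<le> \<gamma> t * kappa\<^sup>2" "0 < \<gamma> t * lam t"
      using gamma_pos[of t] lam_pos[of t] that by simp_all
    then show ?thesis using N[of t] that by linarith
  qed
  have rec: "(tracking_error (Suc t))\<^sup>2 \<le> (1 - \<gamma> (Suc t) * lam (Suc t))\<^sup>2
          * (tracking_error t + norm (flam (lam (Suc t)) - flam (lam (Suc t - 1))))\<^sup>2
          + 2 * noise_bound * (\<gamma> (Suc t))\<^sup>2" if "t \<ge> N" for t
    using tracking_error_recursion[of t] N[of "Suc t"] that lam_pos gamma_pos[of "Suc t"] by simp
  have "tracking_error \<longlonglongrightarrow> 0"
    using noise_bound_nonneg
    by (intro perturbed_recursion_step_size_conditions[where x="\<lambda>t. \<gamma> t * lam t" and g=\<gamma>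
          and d="\<lambda>k. norm (flam (lam k) - flam (lam (k - 1)))", OF tracking_error_nonneg _ _ q rec A B C])
       simp_all
  moreover have "(\<lambda>t. flam (lam t)) \<longlonglongrightarrow> fr"
    by (rule flam_tendsto[OF lam_pos lam_lim])
  ultimately have "(\<lambda>t. (tracking_error t + norm (flam (lam t) - fr))\<^sup>2) \<longlonglongrightarrow> (0 + norm (fr - fr))\<^sup>2"
    by (intro tendsto_intros)
  then have bound: "(\<lambda>t. (tracking_error t + norm (flam (lam t) - fr))\<^sup>2) \<longlonglongrightarrow> 0" by simp
  show ?thesis
    by (rule tendsto_sandwich[OF _ _ tendsto_const bound])
       (simp_all add: integral_nonneg_AE expected_error_le)
qed

end
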